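(* Let $R$ be a commutative Noetherian ring, $M$ a finitely generated $R$-module, and $X \subseteq \mathrm{Spec}(R)$ a basic set. For any subset $S \subseteq M$ there exists a finite set of primes $\Lambda \subseteq X$ such that for every $\mathfrak{p} \in X \setminus \Lambda$ there exists $\mathfrak{q} \in \Lambda$ with $\mathfrak{q} \subsetneq \mathfrak{p}$ and $\delta_\mathfrak{p}(S,M) = \delta_\mathfrak{q}(S,M)$.
   Context: A subset $X \subseteq \mathrm{Spec}(R)$ is basic if, whenever the intersection of a family of primes in $X$ is a prime ideal, that intersection belongs to $X$. For $S \subseteq M$ let $\langle S \rangle$ be the $R$-submodule generated by $S$. For a prime $\mathfrak{p}$, $\delta_\mathfrak{p}(S,M)$ is the largest integer $n \ge 0$ such that there is a free $R_\mathfrak{p}$-submodule $G \subseteq \langle S\rangle_\mathfrak{p}$ of rank $n$ which is a direct summand of $M_\mathfrak{p}$. *)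

theory Defs
  imports Complex_Main
begin

text \<open>The ring R is the whole type 'a (class comm_ring_1); the R-module M is the whole
type 'm with scalar multiplication scale, satisfying the library locale module.\<close>

definition ring_ideal :: "'a::comm_ring_1 set \<Rightarrow> bool" where
  "ring_ideal I \<longleftrightarrow> 0 \<in> I \<and> (\<forall>x\<in>I. \<forall>y\<in>I. x + y \<in> I) \<and> (\<forall>r. \<forall>x\<in>I. r * x \<in> I)"

definition prime_ideal :: "'a::comm_ring_1 set \<Rightarrow> bool" where
  "prime_ideal P \<longleftrightarrow> ring_ideal P \<and> 1 \<notin> P \<and> (\<forall>a b. a * b \<in> P \<longrightarrow> a \<in> P \<or> b \<in> P)"

definition Spec :: "'a::comm_ring_1 set set" where
  "Spec = {P. prime_ideal P}"

definition noetherian_ring :: "'a::comm_ring_1 itself \<Rightarrow> bool" where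
  "noetherian_ring _ \<longleftrightarrow>
     (\<forall>I :: nat \<Rightarrow> 'a set. (\<forall>n. ring_ideal (I n)) \<and> (\<forall>n. I n \<subseteq> I (Suc n))
        \<longrightarrow> (\<exists>N. \<forall>n\<ge>N. I n = I N))"

definition finitely_generated :: "('a::comm_ring_1 \<Rightarrow> 'm::ab_group_add \<Rightarrow> 'm) \<Rightarrow> bool" where
  "finitely_generated scale \<longleftrightarrow> (\<exists>F. finite F \<and> module.span scale F = UNIV)"

definition basic :: "'a::comm_ring_1 set set \<Rightarrow> bool" where
  "basic X \<longleftrightarrow> X \<subseteq> Spec \<and>
     (\<forall>F. F \<subseteq> X \<and> F \<noteq> {} \<and> prime_ideal (\<Inter>F) \<longrightarrow> \<Inter>F \<in> X)"

text \<open>Elements of the localization N_p (for an R-module N with scalar action scale) are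
equivalence classes of pairs (m,u) with u not in p, where (m,u) ~ (m',u') iff
t (u' m - u m') = 0 for some t not in p.  R_p is the case scale = (*).\<close>

definition lcls :: "('a::comm_ring_1 \<Rightarrow> 'b::ab_group_add \<Rightarrow> 'b) \<Rightarrow> 'a set \<Rightarrow> 'b \<Rightarrow> 'a \<Rightarrow> ('b \<times> 'a) set" where
  "lcls scale p m u = {(m', u'). u' \<notin> p \<and> (\<exists>t. t \<notin> p \<and> scale t (scale u' m - scale u m') = 0)}"

text \<open>The localization of the submodule N at p, viewed inside M_p.\<close>
definition locset :: "('a::comm_ring_1 \<Rightarrow> 'b::ab_group_add \<Rightarrow> 'b) \<Rightarrow> 'a set \<Rightarrow> 'b set \<Rightarrow> ('b \<times> 'a) set set" where
  "locset scale p N = {lcls scale p m u | m u. m \<in> N \<and> u \<notin> p}"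

definition lrep :: "('b \<times> 'a) set \<Rightarrow> 'b \<times> 'a" where
  "lrep x = (SOME r. r \<in> x)"

definition loc_zero :: "('a::comm_ring_1 \<Rightarrow> 'b::ab_group_add \<Rightarrow> 'b) \<Rightarrow> 'a set \<Rightarrow> ('b \<times> 'a) set" where
  "loc_zero scale p = lcls scale p 0 1"

definition loc_add :: "('a::comm_ring_1 \<Rightarrow> 'b::ab_group_add \<Rightarrow> 'b) \<Rightarrow> 'a set \<Rightarrow>
    ('b \<times> 'a) set \<Rightarrow> ('b \<times> 'a) set \<Rightarrow> ('b \<times> 'a) set" where
  "loc_add scale p x y =
     (case lrep x of (m, u) \<Rightarrow> case lrep y of (m', u') \<Rightarrow>
        lcls scale p (scale u' m + scale u m') (u * u'))"

definition loc_smult :: "('a::comm_ring_1 \<Rightarrow> 'b::ab_group_add \<Rightarrow> 'b) \<Rightarrow> 'a set \<Rightarrow>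
    ('a \<times> 'a) set \<Rightarrow> ('b \<times> 'a) set \<Rightarrow> ('b \<times> 'a) set" where
  "loc_smult scale p a x =
     (case lrep a of (r, v) \<Rightarrow> case lrep x of (m, u) \<Rightarrow> lcls scale p (scale r m) (v * u))"

fun loc_lsum :: "('a::comm_ring_1 \<Rightarrow> 'b::ab_group_add \<Rightarrow> 'b) \<Rightarrow> 'a set \<Rightarrow>
    (nat \<Rightarrow> ('a \<times> 'a) set) \<Rightarrow> (nat \<Rightarrow> ('b \<times> 'a) set) \<Rightarrow> nat \<Rightarrow> ('b \<times> 'a) set" where
  "loc_lsum scale p a g 0 = loc_zero scale p"
| "loc_lsum scale p a g (Suc n) = loc_add scale p (loc_lsum scale p a g n) (loc_smult scale p (a n) (g n))"

definition loc_submodule :: "('a::comm_ring_1 \<Rightarrow> 'b::ab_group_add \<Rightarrow> 'b) \<Rightarrow> 'a set \<Rightarrow> ('b \<times> 'a) set set \<Rightarrow> bool" where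
  "loc_submodule scale p H \<longleftrightarrow> H \<subseteq> locset scale p UNIV \<and> loc_zero scale p \<in> H \<and>
     (\<forall>x\<in>H. \<forall>y\<in>H. loc_add scale p x y \<in> H) \<and>
     (\<forall>a\<in>locset (*) p UNIV. \<forall>x\<in>H. loc_smult scale p a x \<in> H)"

definition loc_free_rank :: "('a::comm_ring_1 \<Rightarrow> 'b::ab_group_add \<Rightarrow> 'b) \<Rightarrow> 'a set \<Rightarrow> ('b \<times> 'a) set set \<Rightarrow> nat \<Rightarrow> bool" where
  "loc_free_rank scale p G n \<longleftrightarrow>
     (\<exists>g. (\<forall>i<n. g i \<in> locset scale p UNIV) \<and>
          G = {loc_lsum scale p a g n | a. \<forall>i<n. a i \<in> locset (*) p UNIV} \<and>
          (\<forall>a. (\<forall>i<n. a i \<in> locset (*) p UNIV) \<and> loc_lsum scale p a g n = loc_zero scale p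
               \<longrightarrow> (\<forall>i<n. a i = loc_zero (*) p)))"

definition loc_direct_summand :: "('a::comm_ring_1 \<Rightarrow> 'b::ab_group_add \<Rightarrow> 'b) \<Rightarrow> 'a set \<Rightarrow> ('b \<times> 'a) set set \<Rightarrow> bool" where
  "loc_direct_summand scale p G \<longleftrightarrow>
     loc_submodule scale p G \<and>
     (\<exists>H. loc_submodule scale p H \<and> G \<inter> H = {loc_zero scale p} \<and>
          (\<forall>x\<in>locset scale p UNIV. \<exists>g\<in>G. \<exists>h\<in>H. x = loc_add scale p g h))"

definition delta :: "('a::comm_ring_1 \<Rightarrow> 'm::ab_group_add \<Rightarrow> 'm) \<Rightarrow> 'a set \<Rightarrow> 'm set \<Rightarrow> nat" where
  "delta scale p S = (GREATEST n. \<exists>G. loc_free_rank scale p G n \<and>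
       G \<subseteq> locset scale p (module.span scale S) \<and> loc_direct_summand scale p G)"

end

theory Submission
  imports Defs
begin

(* delta_p(S,M) >= n has a witness that never mentions localisation: elements x_1, ..., x_n of
   <S> and R-linear forms f_1, ..., f_n on M with f_i(x_j) = s if i = j and 0 otherwise, for
   some s outside p.  A free rank n summand of M_p inside <S>_p yields such a witness once M is
   finitely generated and R is Noetherian (the relations among the generators of M need a
   single common annihilator outside p), and conversely.  The witness serves every prime not
   containing s, so delta is antitone along inclusions of primes and cannot drop near a given
   prime; it is also bounded by the number of generators of M.  By Noetherian induction on the
   intersection, every set of primes is a finite union of subsets with prime intersection.
   Decomposing each fibre {p in X. delta_p = n} this way, Lambda collects the intersections,
   which lie in X because X is basic; for a prime p in such a piece C, the intersection q of C
   has delta_q >= delta_p = n by antitonicity, and delta_q <= n since some prime of C avoids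
   the witness s of q. *)

section \<open>Prime ideals and Noetherian rings\<close>

lemma prime_ideal_0: "prime_ideal p \<Longrightarrow> 0 \<in> p"
  by (simp add: prime_ideal_def ring_ideal_def)

lemma prime_ideal_1: "prime_ideal p \<Longrightarrow> 1 \<notin> p"
  by (simp add: prime_ideal_def)

lemma prime_ideal_add: "prime_ideal p \<Longrightarrow> x \<in> p \<Longrightarrow> y \<in> p \<Longrightarrow> x + y \<in> p"
  by (simp add: prime_ideal_def ring_ideal_def)

lemma prime_ideal_mult_left: "prime_ideal p \<Longrightarrow> x \<in> p \<Longrightarrow> r * x \<in> p"
  by (simp add: prime_ideal_def ring_ideal_def)

lemma prime_ideal_diff: "prime_ideal p \<Longrightarrow> x \<in> p \<Longrightarrow> y \<in> p \<Longrightarrow> x - y \<in> p"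
  using prime_ideal_add[of p x "(-1) * y"] prime_ideal_mult_left[of p y "-1"] by simp

lemma prime_ideal_mult_notin: "prime_ideal p \<Longrightarrow> a \<notin> p \<Longrightarrow> b \<notin> p \<Longrightarrow> a * b \<notin> p"
  by (auto simp: prime_ideal_def)

lemma prime_ideal_prod_notin:
  "prime_ideal p \<Longrightarrow> (\<And>i. i \<in> A \<Longrightarrow> f i \<notin> p) \<Longrightarrow> prod f A \<notin> p"
  by (induction A rule: infinite_finite_induct) (auto simp: prime_ideal_1 prime_ideal_mult_notin)

lemma module_mult: "module ((*) :: 'a::comm_ring_1 \<Rightarrow> 'a \<Rightarrow> 'a)"
  by unfold_locales (auto simp: algebra_simps)

lemma noetherian_ring_wf_psupset:
  assumes "noetherian_ring TYPE('a::comm_ring_1)"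
  shows "wf {(J, I :: 'a set). ring_ideal I \<and> ring_ideal J \<and> I \<subset> J}"
  unfolding wf_iff_no_infinite_down_chain
proof clarify
  fix I :: "nat \<Rightarrow> 'a set"
  assume "\<forall>n. (I (Suc n), I n) \<in> {(J, I). ring_ideal I \<and> ring_ideal J \<and> I \<subset> J}"
  then have ideal: "\<forall>n. ring_ideal (I n)" and strict: "\<And>n. I n \<subset> I (Suc n)" by auto
  then have "\<forall>n. I n \<subseteq> I (Suc n)" by blast
  moreover have "(\<forall>n. ring_ideal (I n)) \<and> (\<forall>n. I n \<subseteq> I (Suc n)) \<longrightarrow> (\<exists>N. \<forall>n\<ge>N. I n = I N)"
    using assms unfolding noetherian_ring_def by (rule spec)
  ultimately obtain N where "\<forall>n\<ge>N. I n = I N" using ideal by blast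
  then have "I (Suc N) = I N" by (elim allE[of _ "Suc N"]) simp
  then show False using strict[of N] by simp
qed

lemma noetherian_ring_maximal:
  assumes "noetherian_ring TYPE('a::comm_ring_1)" and "I \<in> \<I>" and "\<And>I. I \<in> \<I> \<Longrightarrow> ring_ideal (I :: 'a set)"
  obtains M where "M \<in> \<I>" "\<And>J. J \<in> \<I> \<Longrightarrow> M \<subseteq> J \<Longrightarrow> J = M"
proof -
  obtain M where M: "M \<in> \<I>"
    and min: "\<And>J. (J, M) \<in> {(J, I). ring_ideal I \<and> ring_ideal J \<and> I \<subset> J} \<Longrightarrow> J \<notin> \<I>"
    by (rule wfE_min[OF noetherian_ring_wf_psupset[OF assms(1)] assms(2)]) blast
  show ?thesis
  proof (rule that[OF M])
    fix J assume J: "J \<in> \<I>" "M \<subseteq> J"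
    show "J = M"
    proof (rule ccontr)
      assume "J \<noteq> M"
      then have "(J, M) \<in> {(J, I). ring_ideal I \<and> ring_ideal J \<and> I \<subset> J}"
        using J M assms(3) by auto
      then show False using min J(1) by blast
    qed
  qed
qed

lemma ring_ideal_span: "ring_ideal (module.span (*) F)"
  using module.subspace_span[OF module_mult, of F]
  unfolding ring_ideal_def module.subspace_def[OF module_mult] by simp

lemma noetherian_ring_span_finite_subset:
  assumes "noetherian_ring TYPE('a::comm_ring_1)"
  obtains F where "finite F" "F \<subseteq> Y" "Y \<subseteq> module.span (*) (F :: 'a set)"
proof -
  let ?\<I> = "{module.span (*) F | F. finite F \<and> F \<subseteq> Y}"
  have empty: "module.span (*) {} \<in> ?\<I>" by auto
  have ideals: "ring_ideal I" if "I \<in> ?\<I>" for I using that ring_ideal_span by auto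
  obtain M where "M \<in> ?\<I>" and max: "\<And>J. J \<in> ?\<I> \<Longrightarrow> M \<subseteq> J \<Longrightarrow> J = M"
    using noetherian_ring_maximal[OF assms empty ideals] by blast
  then obtain F where F: "M = module.span (*) F" "finite F" "F \<subseteq> Y" by blast
  have "x \<in> module.span (*) F" if x: "x \<in> Y" for x
  proof -
    have "module.span (*) (insert x F) \<in> ?\<I>" using F x by auto
    moreover have "module.span (*) F \<subseteq> module.span (*) (insert x F)"
      by (rule module.span_mono[OF module_mult]) blast
    ultimately have "module.span (*) (insert x F) = module.span (*) F" using max F(1) by blast
    then show ?thesis using module.span_base[OF module_mult, of x "insert x F"] by simp
  qed
  then show ?thesis using that F by blast
qed

lemma prime_ideal_finite_common_annihilator:
  assumes p: "prime_ideal p" and "finite Y" and "\<And>y. y \<in> Y \<Longrightarrow> \<exists>t. t \<notin> p \<and> t * y = 0"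
  obtains T where "T \<notin> p" "\<And>y. y \<in> Y \<Longrightarrow> T * y = (0::'a::comm_ring_1)"
proof -
  obtain t where t: "\<And>y. y \<in> Y \<Longrightarrow> t y \<notin> p \<and> t y * y = 0" using assms(3) by metis
  have "prod t Y * y = 0" if "y \<in> Y" for y
  proof -
    have "prod t Y * y = prod t (Y - {y}) * (t y * y)"
      using assms(2) that by (simp add: prod.remove ac_simps)
    then show ?thesis using t[OF that] by simp
  qed
  moreover have "prod t Y \<notin> p" using t by (intro prime_ideal_prod_notin[OF p]) blast
  ultimately show ?thesis using that by blast
qed

lemma noetherian_ring_common_annihilator:
  assumes N: "noetherian_ring TYPE('a::comm_ring_1)" and p: "prime_ideal p"
    and Y: "\<And>y. y \<in> Y \<Longrightarrow> \<exists>t. t \<notin> p \<and> t * y = (0::'a)"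
  obtains T where "T \<notin> p" "\<And>y. y \<in> Y \<Longrightarrow> T * y = 0"
proof -
  obtain F where F: "finite F" "F \<subseteq> Y" "Y \<subseteq> module.span (*) F"
    by (rule noetherian_ring_span_finite_subset[OF N])
  obtain T where T: "T \<notin> p" "\<And>y. y \<in> F \<Longrightarrow> T * y = 0"
    using prime_ideal_finite_common_annihilator[OF p F(1)] F(2) Y by blast
  have "module.subspace (*) {y. T * y = 0}"
    unfolding module.subspace_def[OF module_mult] by (simp add: distrib_left mult.left_commute)
  then have "module.span (*) F \<subseteq> {y. T * y = 0}"
    using T(2) by (intro module.span_minimal[OF module_mult]) auto
  then show ?thesis using that T(1) F(3) by blast
qed

definition finite_prime_cover :: "'a::comm_ring_1 set set \<Rightarrow> bool" where
  "finite_prime_cover B \<longleftrightarrow>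
     (\<exists>\<C>. finite \<C> \<and> (\<forall>C\<in>\<C>. C \<noteq> {} \<and> C \<subseteq> B \<and> prime_ideal (\<Inter>C)) \<and> B \<subseteq> \<Union>\<C>)"

lemma finite_prime_cover_Un:
  "finite_prime_cover A \<Longrightarrow> finite_prime_cover B \<Longrightarrow> finite_prime_cover (A \<union> B)"
  unfolding finite_prime_cover_def
proof (elim exE conjE)
  fix \<C> \<D> assume "finite \<C>" "\<forall>C\<in>\<C>. C \<noteq> {} \<and> C \<subseteq> A \<and> prime_ideal (\<Inter>C)" "A \<subseteq> \<Union>\<C>"
    and "finite \<D>" "\<forall>C\<in>\<D>. C \<noteq> {} \<and> C \<subseteq> B \<and> prime_ideal (\<Inter>C)" "B \<subseteq> \<Union>\<D>"
  then show "\<exists>\<C>. finite \<C> \<and> (\<forall>C\<in>\<C>. C \<noteq> {} \<and> C \<subseteq> A \<union> B \<and> prime_ideal (\<Inter>C)) \<and> A \<union> B \<subseteq> \<Union>\<C>"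
    by (intro exI[of _ "\<C> \<union> \<D>"]) blast
qed

lemma ring_ideal_Inter_Spec: "B \<noteq> {} \<Longrightarrow> B \<subseteq> Spec \<Longrightarrow> ring_ideal (\<Inter>B)"
  unfolding ring_ideal_def Spec_def prime_ideal_def by blast

lemma Spec_split_if_not_prime_Inter:
  assumes B: "B \<noteq> {}" "B \<subseteq> Spec" and np: "\<not> prime_ideal (\<Inter>B)"
  obtains B1 B2 where "B = B1 \<union> B2" "B1 \<noteq> {}" "B2 \<noteq> {}" "\<Inter>B \<subset> \<Inter>B1" "\<Inter>B \<subset> \<Inter>B2"
proof -
  have prime: "prime_ideal P" if "P \<in> B" for P using that B(2) unfolding Spec_def by blast
  have "1 \<notin> \<Inter>B" using B(1) prime prime_ideal_1 by blast
  then obtain a b where ab: "a * b \<in> \<Inter>B" "a \<notin> \<Inter>B" "b \<notin> \<Inter>B"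
    using np ring_ideal_Inter_Spec[OF B] unfolding prime_ideal_def by blast
  define B1 where "B1 = {P\<in>B. a \<in> P}"
  define B2 where "B2 = {P\<in>B. b \<in> P}"
  have B12: "B = B1 \<union> B2"
    using ab(1) prime unfolding B1_def B2_def prime_ideal_def by blast
  have "a \<in> \<Inter>B1" "b \<in> \<Inter>B2" "\<Inter>B \<subseteq> \<Inter>B1" "\<Inter>B \<subseteq> \<Inter>B2"
    unfolding B1_def B2_def by blast+
  then have "\<Inter>B \<subset> \<Inter>B1" "\<Inter>B \<subset> \<Inter>B2" using ab(2,3) by blast+
  moreover have "B1 \<noteq> {}" "B2 \<noteq> {}" using B12 ab(2,3) unfolding B1_def B2_def by blast+
  ultimately show ?thesis using that[OF B12] by blast
qed

lemma noetherian_ring_finite_prime_cover: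
  assumes N: "noetherian_ring TYPE('a::comm_ring_1)" and B: "B \<subseteq> (Spec :: 'a set set)"
  shows "finite_prime_cover B"
proof (cases "B = {}")
  case True
  then show ?thesis unfolding finite_prime_cover_def by auto
next
  case False
  have "\<forall>B. B \<noteq> {} \<longrightarrow> B \<subseteq> (Spec :: 'a set set) \<longrightarrow> \<Inter>B = I \<longrightarrow> finite_prime_cover B" for I
  proof (induction I rule: wf_induct_rule[OF noetherian_ring_wf_psupset[OF N]])
    case (1 I)
    show ?case
    proof (intro allI impI)
      fix B :: "'a set set" assume B: "B \<noteq> {}" "B \<subseteq> Spec" and I: "\<Inter>B = I"
      show "finite_prime_cover B"
      proof (cases "prime_ideal (\<Inter>B)")
        case True
        then show ?thesis unfolding finite_prime_cover_def using B(1) by (intro exI[of _ "{B}"]) auto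
      next
        case False
        then obtain B1 B2 where B12: "B = B1 \<union> B2" "B1 \<noteq> {}" "B2 \<noteq> {}" "\<Inter>B \<subset> \<Inter>B1" "\<Inter>B \<subset> \<Inter>B2"
          using Spec_split_if_not_prime_Inter[OF B] by blast
        have IH: "finite_prime_cover Bi" if Bi: "Bi \<noteq> {}" "Bi \<subseteq> B" "\<Inter>B \<subset> \<Inter>Bi" for Bi
        proof -
          have Spec_i: "Bi \<subseteq> Spec" using Bi(2) B(2) by blast
          moreover have "(\<Inter>Bi, I) \<in> {(J, I). ring_ideal I \<and> ring_ideal J \<and> I \<subset> J}"
            using ring_ideal_Inter_Spec[OF Bi(1) Spec_i] ring_ideal_Inter_Spec[OF B] I Bi(3) by blast
          ultimately show ?thesis using 1 Bi(1) by blast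
        qed
        have "finite_prime_cover (B1 \<union> B2)"
          by (rule finite_prime_cover_Un[OF IH IH]) (use B12 in auto)
        then show ?thesis unfolding B12(1) .
      qed
    qed
  qed
  then show ?thesis using False B by blast
qed

section \<open>A rank bound modulo a prime\<close>

(* w and v factor s times the identity on J through L, modulo p. *)
definition factors_mod ::
    "'a::comm_ring_1 set \<Rightarrow> 'a \<Rightarrow> 'i set \<Rightarrow> 'l set \<Rightarrow> ('i \<Rightarrow> 'l \<Rightarrow> 'a) \<Rightarrow> ('i \<Rightarrow> 'l \<Rightarrow> 'a) \<Rightarrow> bool" where
  "factors_mod p s J L w v \<longleftrightarrow>
     (\<forall>i\<in>J. \<forall>j\<in>J. (\<Sum>l\<in>L. w i l * v j l) - (if i = j then s else 0) \<in> p)"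

lemma factors_mod_eliminate:
  assumes p: "prime_ideal p" and L: "finite L" "l0 \<notin> L" and j0: "j0 \<in> J"
    and fac: "factors_mod p s J (insert l0 L) w v"
  shows "factors_mod p (v j0 l0 * s) (J - {j0}) L w (\<lambda>j l. v j0 l0 * v j l - v j l0 * v j0 l)"
  unfolding factors_mod_def
proof (intro ballI)
  fix i j assume i: "i \<in> J - {j0}" and j: "j \<in> J - {j0}"
  let ?S = "\<lambda>i j. \<Sum>l\<in>insert l0 L. w i l * v j l"
  let ?\<beta> = "v j0 l0"
  have S: "?S i j = w i l0 * v j l0 + (\<Sum>l\<in>L. w i l * v j l)" for i j using L by simp
  have h1: "?S i j - (if i = j then s else 0) \<in> p" and h2: "?S i j0 - (if i = j0 then s else 0) \<in> p"
    using fac i j j0 unfolding factors_mod_def by blast+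
  have "i \<noteq> j0" using i by blast
  then have "(\<Sum>l\<in>L. w i l * (?\<beta> * v j l - v j l0 * v j0 l)) - (if i = j then ?\<beta> * s else 0)
      = ?\<beta> * (?S i j - (if i = j then s else 0)) - v j l0 * (?S i j0 - (if i = j0 then s else 0))"
    unfolding S by (simp add: right_diff_distrib sum_subtractf sum_distrib_left algebra_simps)
  also have "\<dots> \<in> p"
    using prime_ideal_diff[OF p prime_ideal_mult_left[OF p h1] prime_ideal_mult_left[OF p h2]] .
  finally show "(\<Sum>l\<in>L. w i l * (?\<beta> * v j l - v j l0 * v j0 l)) - (if i = j then ?\<beta> * s else 0) \<in> p" .
qed

lemma factors_mod_drop:
  assumes p: "prime_ideal p" and L: "finite L" "l0 \<notin> L" and col: "\<forall>j\<in>J. v j l0 \<in> p"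
    and fac: "factors_mod p s J (insert l0 L) w v"
  shows "factors_mod p s J L w v"
  unfolding factors_mod_def
proof (intro ballI)
  fix i j assume i: "i \<in> J" and j: "j \<in> J"
  have "(\<Sum>l\<in>insert l0 L. w i l * v j l) - (if i = j then s else 0) \<in> p"
    using fac i j unfolding factors_mod_def by blast
  moreover have "w i l0 * v j l0 \<in> p" using col j by (simp add: prime_ideal_mult_left[OF p])
  ultimately have "(\<Sum>l\<in>insert l0 L. w i l * v j l) - (if i = j then s else 0) - w i l0 * v j l0 \<in> p"
    by (rule prime_ideal_diff[OF p])
  moreover have "(\<Sum>l\<in>insert l0 L. w i l * v j l) - (if i = j then s else 0) - w i l0 * v j l0
      = (\<Sum>l\<in>L. w i l * v j l) - (if i = j then s else 0)"
    using L by simp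
  ultimately show "(\<Sum>l\<in>L. w i l * v j l) - (if i = j then s else 0) \<in> p" by simp
qed

lemma card_le_if_factors_mod:
  assumes p: "prime_ideal p" and "finite L" "finite J" "s \<notin> p" "factors_mod p s J L w v"
  shows "card J \<le> card L"
  using assms(2-)
proof (induction L arbitrary: J s v rule: finite_induct)
  case empty
  have "J = {}"
  proof (rule ccontr)
    assume "J \<noteq> {}"
    then have "0 - s \<in> p" using empty.prems(3) unfolding factors_mod_def by fastforce
    then have "0 - (0 - s) \<in> p" by (rule prime_ideal_diff[OF p prime_ideal_0[OF p]])
    then show False using empty.prems(2) by simp
  qed
  then show ?case by simp
next
  case (insert l0 L)
  show ?case
  proof (cases "\<exists>j0\<in>J. v j0 l0 \<notin> p")
    case True
    then obtain j0 where j0: "j0 \<in> J" "v j0 l0 \<notin> p" by blast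
    have "card (J - {j0}) \<le> card L"
      by (rule insert.IH[OF _ _ factors_mod_eliminate[OF p insert.hyps(1,2) j0(1) insert.prems(3)]])
        (use insert.prems(1,2) j0(2) in \<open>auto simp: prime_ideal_mult_notin[OF p]\<close>)
    moreover have "card J = Suc (card (J - {j0}))"
      using card_Suc_Diff1[OF insert.prems(1) j0(1)] by simp
    ultimately show ?thesis using insert.hyps by simp
  next
    case False
    then have "factors_mod p s J L w v"
      using factors_mod_drop[OF p insert.hyps(1,2) _ insert.prems(3)] by blast
    then have "card J \<le> card L" using insert.IH insert.prems(1,2) by blast
    then show ?thesis using insert.hyps by simp
  qed
qed

section \<open>Arithmetic of localisations\<close>

definition loc_rel ::
    "('a::comm_ring_1 \<Rightarrow> 'b::ab_group_add \<Rightarrow> 'b) \<Rightarrow> 'a set \<Rightarrow> 'b \<Rightarrow> 'a \<Rightarrow> 'b \<Rightarrow> 'a \<Rightarrow> bool" where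
  "loc_rel scale p m u m' u' \<longleftrightarrow> (\<exists>t. t \<notin> p \<and> scale (t * u') m = scale (t * u) m')"

context module
begin

lemma mem_lcls_iff: "(m', u') \<in> lcls scale p m u \<longleftrightarrow> u' \<notin> p \<and> loc_rel scale p m u m' u'"
  by (simp add: lcls_def loc_rel_def scale_right_diff_distrib)

lemma loc_rel_refl: "prime_ideal p \<Longrightarrow> loc_rel scale p m u m u"
  unfolding loc_rel_def using prime_ideal_1 by blast

lemma loc_rel_sym: "loc_rel scale p m u m' u' \<Longrightarrow> loc_rel scale p m' u' m u"
  unfolding loc_rel_def by metis

lemma loc_rel_trans:
  assumes p: "prime_ideal p" and u: "u \<notin> p"
    and "loc_rel scale p m' u' m u" and "loc_rel scale p m u m'' u''"
  shows "loc_rel scale p m' u' m'' u''"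
proof -
  obtain t1 where t1: "t1 \<notin> p" "(t1 * u) *s m' = (t1 * u') *s m"
    using assms(3) unfolding loc_rel_def by blast
  obtain t2 where t2: "t2 \<notin> p" "(t2 * u'') *s m = (t2 * u) *s m''"
    using assms(4) unfolding loc_rel_def by blast
  have "(t1 * t2 * u * u'') *s m' = (t2 * u'') *s ((t1 * u) *s m')" by (simp add: ac_simps)
  also have "\<dots> = (t2 * u'') *s ((t1 * u') *s m)" using t1 by simp
  also have "\<dots> = (t1 * u') *s ((t2 * u'') *s m)" by (simp add: ac_simps)
  also have "\<dots> = (t1 * u') *s ((t2 * u) *s m'')" using t2 by simp
  also have "\<dots> = (t1 * t2 * u * u') *s m''" by (simp add: ac_simps)
  finally show ?thesis
    unfolding loc_rel_def using t1 t2 u p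
    by (intro exI[of _ "t1 * t2 * u"]) (auto simp: prime_ideal_mult_notin ac_simps)
qed

lemma lcls_eq_iff:
  assumes p: "prime_ideal p" and "u \<notin> p" and "u' \<notin> p"
  shows "lcls scale p m u = lcls scale p m' u' \<longleftrightarrow> loc_rel scale p m u m' u'"
proof
  assume "lcls scale p m u = lcls scale p m' u'"
  moreover have "(m', u') \<in> lcls scale p m' u'"
    using assms loc_rel_refl[OF p] by (simp add: mem_lcls_iff)
  ultimately have "(m', u') \<in> lcls scale p m u" by simp
  then show "loc_rel scale p m u m' u'" by (simp add: mem_lcls_iff)
next
  assume r: "loc_rel scale p m u m' u'"
  show "lcls scale p m u = lcls scale p m' u'"
  proof (intro set_eqI, clarify)
    fix a b
    show "(a, b) \<in> lcls scale p m u \<longleftrightarrow> (a, b) \<in> lcls scale p m' u'"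
      unfolding mem_lcls_iff using loc_rel_trans[OF p \<open>u \<notin> p\<close> loc_rel_sym[OF r]]
        loc_rel_trans[OF p \<open>u' \<notin> p\<close> r] by blast
  qed
qed

lemma lrep_lcls:
  assumes p: "prime_ideal p" and u: "u \<notin> p"
  obtains m' u' where "lrep (lcls scale p m u) = (m', u')" "u' \<notin> p" "loc_rel scale p m u m' u'"
proof -
  have "(m, u) \<in> lcls scale p m u" using u loc_rel_refl[OF p] by (simp add: mem_lcls_iff)
  then have "lrep (lcls scale p m u) \<in> lcls scale p m u" unfolding lrep_def by (rule someI)
  then show ?thesis
    using that by (cases "lrep (lcls scale p m u)") (simp add: mem_lcls_iff)
qed

lemma loc_add_lcls:
  assumes p: "prime_ideal p" and u: "u \<notin> p" and u': "u' \<notin> p"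
  shows "loc_add scale p (lcls scale p m u) (lcls scale p m' u') =
         lcls scale p (u' *s m + u *s m') (u * u')"
proof -
  obtain a b where ab: "lrep (lcls scale p m u) = (a, b)" "b \<notin> p" "loc_rel scale p m u a b"
    using lrep_lcls[OF p u] by metis
  obtain a' b' where ab': "lrep (lcls scale p m' u') = (a', b')" "b' \<notin> p" "loc_rel scale p m' u' a' b'"
    using lrep_lcls[OF p u'] by metis
  obtain t1 where t1: "t1 \<notin> p" "(t1 * b) *s m = (t1 * u) *s a"
    using ab(3) unfolding loc_rel_def by blast
  obtain t2 where t2: "t2 \<notin> p" "(t2 * b') *s m' = (t2 * u') *s a'"
    using ab'(3) unfolding loc_rel_def by blast
  have "(t1 * t2 * (u * u') * b') *s a = (t2 * u' * b') *s ((t1 * u) *s a)" by (simp add: ac_simps)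
  also have "\<dots> = (t2 * u' * b') *s ((t1 * b) *s m)" using t1 by simp
  also have "\<dots> = (t1 * t2 * (b * b') * u') *s m" by (simp add: ac_simps)
  finally have e1: "(t1 * t2 * (u * u') * b') *s a = (t1 * t2 * (b * b') * u') *s m" .
  have "(t1 * t2 * (u * u') * b) *s a' = (t1 * u * b) *s ((t2 * u') *s a')" by (simp add: ac_simps)
  also have "\<dots> = (t1 * u * b) *s ((t2 * b') *s m')" using t2 by simp
  also have "\<dots> = (t1 * t2 * (b * b') * u) *s m'" by (simp add: ac_simps)
  finally have e2: "(t1 * t2 * (u * u') * b) *s a' = (t1 * t2 * (b * b') * u) *s m'" .
  have "(t1 * t2 * (u * u')) *s (b' *s a + b *s a') = (t1 * t2 * (b * b')) *s (u' *s m + u *s m')"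
    using e1 e2 by (simp add: scale_right_distrib ac_simps)
  then have "loc_rel scale p (b' *s a + b *s a') (b * b') (u' *s m + u *s m') (u * u')"
    unfolding loc_rel_def using t1 t2 p
    by (intro exI[of _ "t1 * t2"]) (auto simp: prime_ideal_mult_notin)
  then show ?thesis
    unfolding loc_add_def ab(1) ab'(1)
    by (simp add: lcls_eq_iff[OF p] prime_ideal_mult_notin[OF p] ab(2) ab'(2) u u')
qed

lemma loc_smult_lcls:
  assumes p: "prime_ideal p" and u: "u \<notin> p" and v: "v \<notin> p"
  shows "loc_smult scale p (lcls (*) p r v) (lcls scale p m u) = lcls scale p (r *s m) (v * u)"
proof -
  obtain r' v' where rv: "lrep (lcls (*) p r v) = (r', v')" "v' \<notin> p" "loc_rel (*) p r v r' v'"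
    using module.lrep_lcls[OF module_mult p v] by metis
  obtain a b where ab: "lrep (lcls scale p m u) = (a, b)" "b \<notin> p" "loc_rel scale p m u a b"
    using lrep_lcls[OF p u] by metis
  obtain t1 where t1: "t1 \<notin> p" "(t1 * v') * r = (t1 * v) * r'"
    using rv(3) unfolding loc_rel_def by blast
  obtain t2 where t2: "t2 \<notin> p" "(t2 * b) *s m = (t2 * u) *s a"
    using ab(3) unfolding loc_rel_def by blast
  have "(t1 * t2 * (v * u)) *s (r' *s a) = ((t1 * v * r') * u) *s (t2 *s a)" by (simp add: ac_simps)
  also have "\<dots> = ((t1 * v' * r) * u) *s (t2 *s a)" using t1 by (simp add: ac_simps)
  also have "\<dots> = (t1 * v' * r) *s ((t2 * u) *s a)" by (simp add: ac_simps)
  also have "\<dots> = (t1 * v' * r) *s ((t2 * b) *s m)" using t2 by simp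
  also have "\<dots> = (t1 * t2 * (v' * b)) *s (r *s m)" by (simp add: ac_simps)
  finally have "loc_rel scale p (r' *s a) (v' * b) (r *s m) (v * u)"
    unfolding loc_rel_def using t1 t2 p
    by (intro exI[of _ "t1 * t2"]) (auto simp: prime_ideal_mult_notin)
  then show ?thesis
    unfolding loc_smult_def rv(1) ab(1)
    by (simp add: lcls_eq_iff[OF p] prime_ideal_mult_notin[OF p] rv(2) ab(2) u v)
qed

lemma lcls_eq_loc_zero_iff:
  assumes p: "prime_ideal p" and u: "u \<notin> p"
  shows "lcls scale p m u = loc_zero scale p \<longleftrightarrow> (\<exists>t. t \<notin> p \<and> t *s m = 0)"
  unfolding loc_zero_def using u prime_ideal_1[OF p]
  by (subst lcls_eq_iff[OF p]) (auto simp: loc_rel_def)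

lemma mem_locset_iff: "x \<in> locset scale p N \<longleftrightarrow> (\<exists>m u. x = lcls scale p m u \<and> m \<in> N \<and> u \<notin> p)"
  unfolding locset_def by blast

lemma loc_lsum_lcls:
  assumes p: "prime_ideal p"
    and "\<And>i. i < n \<Longrightarrow> v i \<notin> p \<and> w i \<notin> p \<and> a i = lcls (*) p (r i) (v i) \<and> g i = lcls scale p (y i) (w i)"
  shows "loc_lsum scale p a g n =
    lcls scale p (\<Sum>i<n. (r i * (\<Prod>j\<in>{..<n}-{i}. v j * w j)) *s y i) (\<Prod>j<n. v j * w j)"
  using assms(2)
proof (induction n)
  case 0
  then show ?case by (simp add: loc_zero_def)
next
  case (Suc n)
  let ?P = "\<lambda>n i. \<Prod>j\<in>{..<n}-{i}. v j * w j"
  have hn: "v n \<notin> p" "w n \<notin> p" "a n = lcls (*) p (r n) (v n)" "g n = lcls scale p (y n) (w n)"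
    using Suc.prems by auto
  have V: "(\<Prod>j<n. v j * w j) \<notin> p"
    using Suc.prems by (intro prime_ideal_prod_notin[OF p]) (auto simp: prime_ideal_mult_notin[OF p])
  have P: "?P (Suc n) i = (v n * w n) * ?P n i" if "i < n" for i
  proof -
    have "{..<Suc n}-{i} = insert n ({..<n}-{i})" using that by auto
    then show ?thesis by simp
  qed
  have "{..<Suc n}-{n} = {..<n}" by auto
  then have Pn: "?P (Suc n) n = (\<Prod>j<n. v j * w j)" by simp
  have "loc_lsum scale p a g (Suc n) = lcls scale p
      ((v n * w n) *s (\<Sum>i<n. (r i * ?P n i) *s y i) + (\<Prod>j<n. v j * w j) *s (r n *s y n))
      ((\<Prod>j<n. v j * w j) * (v n * w n))"
    using Suc by (simp add: hn loc_smult_lcls[OF p] loc_add_lcls[OF p] V prime_ideal_mult_notin[OF p])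
  also have "(v n * w n) *s (\<Sum>i<n. (r i * ?P n i) *s y i) = (\<Sum>i<n. (r i * ?P (Suc n) i) *s y i)"
    unfolding scale_sum_right by (intro sum.cong refl) (simp add: P ac_simps)
  finally show ?case by (simp add: Pn ac_simps)
qed

lemma loc_lsum_common_denominator:
  assumes p: "prime_ideal p" and g: "\<And>i. i < n \<Longrightarrow> w i \<notin> p \<and> g i = lcls scale p (y i) (w i)"
    and u: "u \<notin> p"
  shows "loc_lsum scale p (\<lambda>j. lcls (*) p (c j * w j) u) g n = lcls scale p (\<Sum>j<n. c j *s y j) u"
proof -
  let ?P = "\<lambda>i. \<Prod>j\<in>{..<n}-{i}. u * w j"
  have "loc_lsum scale p (\<lambda>j. lcls (*) p (c j * w j) u) g n =
      lcls scale p (\<Sum>i<n. (c i * w i * ?P i) *s y i) (\<Prod>j<n. u * w j)"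
    by (rule loc_lsum_lcls[OF p]) (use g u in auto)
  also have "\<dots> = lcls scale p (\<Sum>j<n. c j *s y j) u"
  proof (subst lcls_eq_iff[OF p])
    show "(\<Prod>j<n. u * w j) \<notin> p"
      using g u by (intro prime_ideal_prod_notin[OF p]) (auto simp: prime_ideal_mult_notin[OF p])
    have "u *s (\<Sum>i<n. (c i * w i * ?P i) *s y i) = (\<Prod>j<n. u * w j) *s (\<Sum>j<n. c j *s y j)"
      unfolding scale_sum_right
    proof (intro sum.cong refl)
      fix i assume "i \<in> {..<n}"
      then have "(\<Prod>j<n. u * w j) = (u * w i) * ?P i" by (simp add: prod.remove)
      then show "u *s (c i * w i * ?P i) *s y i = (\<Prod>j<n. u * w j) *s c i *s y i"
        by (simp add: ac_simps)
    qed
    then show "loc_rel scale p (\<Sum>i<n. (c i * w i * ?P i) *s y i) (\<Prod>j<n. u * w j) (\<Sum>j<n. c j *s y j) u"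
      unfolding loc_rel_def using prime_ideal_1[OF p] by (intro exI[of _ 1]) simp
  qed (fact u)
  finally show ?thesis .
qed

lemma loc_lsum_eq_lcls_sum:
  assumes p: "prime_ideal p" and g: "\<And>i. i < n \<Longrightarrow> w i \<notin> p \<and> g i = lcls scale p (y i) (w i)"
    and a: "\<forall>i<n. a i \<in> locset (*) p UNIV"
  obtains c u where "u \<notin> p" "loc_lsum scale p a g n = lcls scale p (\<Sum>j<n. c j *s y j) u"
proof -
  have "\<forall>i<n. \<exists>r v. a i = lcls (*) p r v \<and> v \<notin> p"
    using a by (auto simp: module.mem_locset_iff[OF module_mult])
  then obtain r v where rv: "\<And>i. i < n \<Longrightarrow> a i = lcls (*) p (r i) (v i) \<and> v i \<notin> p"
    by metis
  have "loc_lsum scale p a g n = lcls scale p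
     (\<Sum>i<n. (r i * (\<Prod>j\<in>{..<n}-{i}. v j * w j)) *s y i) (\<Prod>j<n. v j * w j)"
    by (rule loc_lsum_lcls[OF p]) (use rv g in auto)
  moreover have "(\<Prod>j<n. v j * w j) \<notin> p"
    using rv g by (intro prime_ideal_prod_notin[OF p]) (auto simp: prime_ideal_mult_notin[OF p])
  ultimately show ?thesis
    by (intro that[of _ "\<lambda>i. r i * (\<Prod>j\<in>{..<n}-{i}. v j * w j)"])
qed

lemma loc_lsum_range_eq:
  assumes p: "prime_ideal p" and g: "\<And>i. i < n \<Longrightarrow> w i \<notin> p \<and> g i = lcls scale p (y i) (w i)"
  shows "{loc_lsum scale p a g n | a. \<forall>i<n. a i \<in> locset (*) p UNIV} =
         {lcls scale p (\<Sum>j<n. c j *s y j) u | c u. u \<notin> p}"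
proof (intro set_eqI iffI)
  fix X assume "X \<in> {loc_lsum scale p a g n | a. \<forall>i<n. a i \<in> locset (*) p UNIV}"
  then obtain a where X: "X = loc_lsum scale p a g n" and a: "\<forall>i<n. a i \<in> locset (*) p UNIV"
    by blast
  obtain c u where "u \<notin> p" "loc_lsum scale p a g n = lcls scale p (\<Sum>j<n. c j *s y j) u"
    by (rule loc_lsum_eq_lcls_sum[OF p g a])
  then show "X \<in> {lcls scale p (\<Sum>j<n. c j *s y j) u | c u. u \<notin> p}" unfolding X by blast
next
  fix X assume "X \<in> {lcls scale p (\<Sum>j<n. c j *s y j) u | c u. u \<notin> p}"
  then obtain c u where X: "X = lcls scale p (\<Sum>j<n. c j *s y j) u" and u: "u \<notin> p" by blast
  have "X = loc_lsum scale p (\<lambda>j. lcls (*) p (c j * w j) u) g n"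
    unfolding X using g u by (intro loc_lsum_common_denominator[OF p, symmetric]) auto
  moreover have "\<forall>i<n. lcls (*) p (c i * w i) u \<in> locset (*) p UNIV"
    using u by (auto simp: module.mem_locset_iff[OF module_mult])
  ultimately show "X \<in> {loc_lsum scale p a g n | a. \<forall>i<n. a i \<in> locset (*) p UNIV}"
    by blast
qed

end

section \<open>Free summands of a localisation\<close>

definition loc_basis ::
    "('a::comm_ring_1 \<Rightarrow> 'b::ab_group_add \<Rightarrow> 'b) \<Rightarrow> 'a set \<Rightarrow> ('b \<times> 'a) set set \<Rightarrow> nat \<Rightarrow>
      (nat \<Rightarrow> 'b) \<Rightarrow> bool" where
  "loc_basis scale p G n y \<longleftrightarrow>
     G = locset scale p (range (\<lambda>c. \<Sum>j<n. scale (c j) (y j))) \<and>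
     (\<forall>c. (\<exists>t. t \<notin> p \<and> scale t (\<Sum>j<n. scale (c j) (y j)) = 0) \<longrightarrow> (\<forall>j<n. \<exists>t. t \<notin> p \<and> t * c j = 0))"

context module
begin

lemma subspace_range_sum_scale: "subspace (range (\<lambda>c. \<Sum>j<n. c j *s y j))"
  unfolding subspace_def
proof (intro conjI ballI allI)
  show "0 \<in> range (\<lambda>c. \<Sum>j<n. c j *s y j)" by (rule range_eqI[where x="\<lambda>_. 0"]) simp
next
  fix a b assume "a \<in> range (\<lambda>c. \<Sum>j<n. c j *s y j)" "b \<in> range (\<lambda>c. \<Sum>j<n. c j *s y j)"
  then obtain c d where "a = (\<Sum>j<n. c j *s y j)" "b = (\<Sum>j<n. d j *s y j)" by blast
  then show "a + b \<in> range (\<lambda>c. \<Sum>j<n. c j *s y j)"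
    by (intro range_eqI[where x="\<lambda>j. c j + d j"]) (simp add: scale_left_distrib sum.distrib)
next
  fix r a assume "a \<in> range (\<lambda>c. \<Sum>j<n. c j *s y j)"
  then obtain c where "a = (\<Sum>j<n. c j *s y j)" by blast
  then show "r *s a \<in> range (\<lambda>c. \<Sum>j<n. c j *s y j)"
    by (intro range_eqI[where x="\<lambda>j. r * c j"]) (simp add: scale_sum_right)
qed

lemma locset_range_sum_scale:
  "locset scale p (range (\<lambda>c. \<Sum>j<n. c j *s y j)) =
     {lcls scale p (\<Sum>j<n. c j *s y j) u | c u. u \<notin> p}"
  unfolding locset_def by blast

lemma loc_basis_coefficients_eq_zero:
  assumes p: "prime_ideal p" and B: "loc_basis scale p G n y"
    and a: "\<forall>i<n. a i \<in> locset (*) p UNIV"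
    and zero: "loc_lsum scale p a (\<lambda>i. lcls scale p (y i) 1) n = loc_zero scale p"
  shows "\<forall>i<n. a i = loc_zero (*) p"
proof -
  have one: "(1::'a) \<notin> p" using prime_ideal_1[OF p] .
  have "\<forall>i<n. \<exists>r v. a i = lcls (*) p r v \<and> v \<notin> p"
    using a by (auto simp: module.mem_locset_iff[OF module_mult])
  then obtain r v where rv: "\<And>i. i < n \<Longrightarrow> a i = lcls (*) p (r i) (v i) \<and> v i \<notin> p"
    by metis
  define P where "P i = (\<Prod>j\<in>{..<n}-{i}. v j * 1)" for i
  have P: "P i \<notin> p" for i
    unfolding P_def using rv one by (intro prime_ideal_prod_notin[OF p]) auto
  have V: "(\<Prod>j<n. v j * 1) \<notin> p" using rv one by (intro prime_ideal_prod_notin[OF p]) auto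
  have "loc_lsum scale p a (\<lambda>i. lcls scale p (y i) 1) n
      = lcls scale p (\<Sum>i<n. (r i * P i) *s y i) (\<Prod>j<n. v j * 1)"
    unfolding P_def by (rule loc_lsum_lcls[OF p]) (use rv one in auto)
  then have "lcls scale p (\<Sum>i<n. (r i * P i) *s y i) (\<Prod>j<n. v j * 1) = loc_zero scale p"
    using zero by simp
  then have "\<exists>t. t \<notin> p \<and> t *s (\<Sum>i<n. (r i * P i) *s y i) = 0"
    using lcls_eq_loc_zero_iff[OF p V] by blast
  then have ann: "\<forall>i<n. \<exists>t. t \<notin> p \<and> t * (r i * P i) = 0"
    using B unfolding loc_basis_def by (elim conjE allE[of _ "\<lambda>i. r i * P i"]) (rule mp)
  show ?thesis
  proof (intro allI impI)
    fix i assume i: "i < n"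
    obtain t where t: "t \<notin> p" "t * (r i * P i) = 0" using ann i by blast
    have "t * P i \<notin> p" "(t * P i) * r i = 0"
      using t P prime_ideal_mult_notin[OF p] by (auto simp: ac_simps)
    then show "a i = loc_zero (*) p"
      using rv[OF i] module.lcls_eq_loc_zero_iff[OF module_mult p] by blast
  qed
qed

lemma loc_free_rank_if_loc_basis:
  assumes p: "prime_ideal p" and B: "loc_basis scale p G n y"
  shows "loc_free_rank scale p G n"
  unfolding loc_free_rank_def
proof (intro exI[of _ "\<lambda>i. lcls scale p (y i) 1"] conjI)
  have one: "(1::'a) \<notin> p" using prime_ideal_1[OF p] .
  show "\<forall>i<n. lcls scale p (y i) 1 \<in> locset scale p UNIV" using one by (auto simp: mem_locset_iff)
  have "G = {lcls scale p (\<Sum>j<n. c j *s y j) u | c u. u \<notin> p}"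
    using B unfolding loc_basis_def locset_range_sum_scale by (rule conjunct1)
  also have "\<dots> = {loc_lsum scale p a (\<lambda>i. lcls scale p (y i) 1) n | a. \<forall>i<n. a i \<in> locset (*) p UNIV}"
    using loc_lsum_range_eq[OF p, of n "\<lambda>_. 1"] one by simp
  finally show "G = {loc_lsum scale p a (\<lambda>i. lcls scale p (y i) 1) n | a. \<forall>i<n. a i \<in> locset (*) p UNIV}" .
  show "\<forall>a. (\<forall>i<n. a i \<in> locset (*) p UNIV) \<and>
      loc_lsum scale p a (\<lambda>i. lcls scale p (y i) 1) n = loc_zero scale p \<longrightarrow> (\<forall>i<n. a i = loc_zero (*) p)"
    using loc_basis_coefficients_eq_zero[OF p B] by blast
qed

lemma coefficients_torsion_if_loc_independent:
  assumes p: "prime_ideal p"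
    and ind: "\<And>a. \<forall>i<n. a i \<in> locset (*) p UNIV \<Longrightarrow> loc_lsum scale p a g n = loc_zero scale p
               \<Longrightarrow> \<forall>i<n. a i = loc_zero (*) p"
    and g: "\<And>i. i < n \<Longrightarrow> w i \<notin> p \<and> g i = lcls scale p (y i) (w i)"
    and torsion: "\<exists>t. t \<notin> p \<and> t *s (\<Sum>j<n. c j *s y j) = 0"
  shows "\<forall>j<n. \<exists>t. t \<notin> p \<and> t * c j = 0"
proof (intro allI impI)
  fix i assume i: "i < n"
  have one: "(1::'a) \<notin> p" using prime_ideal_1[OF p] .
  have "loc_lsum scale p (\<lambda>j. lcls (*) p (c j * w j) 1) g n = lcls scale p (\<Sum>j<n. c j *s y j) 1"
    using g one by (intro loc_lsum_common_denominator[OF p]) auto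
  also have "\<dots> = loc_zero scale p" using torsion lcls_eq_loc_zero_iff[OF p one] by blast
  finally have "lcls (*) p (c i * w i) 1 = loc_zero (*) p"
    using ind[of "\<lambda>j. lcls (*) p (c j * w j) 1"] one i
    by (auto simp: module.mem_locset_iff[OF module_mult])
  then obtain t where "t \<notin> p" "t * (c i * w i) = 0"
    using module.lcls_eq_loc_zero_iff[OF module_mult p one] by blast
  then show "\<exists>t. t \<notin> p \<and> t * c i = 0"
    using g[OF i] prime_ideal_mult_notin[OF p] by (intro exI[of _ "t * w i"]) (simp add: ac_simps)
qed

lemma loc_basis_if_loc_free_rank:
  assumes p: "prime_ideal p" and free: "loc_free_rank scale p G n" and G: "G \<subseteq> locset scale p N"
  obtains y where "\<forall>j<n. y j \<in> N" "loc_basis scale p G n y"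
proof -
  obtain g where gl: "\<forall>i<n. g i \<in> locset scale p UNIV"
    and Gdef: "G = {loc_lsum scale p a g n | a. \<forall>i<n. a i \<in> locset (*) p UNIV}"
    and ind: "\<And>a. \<forall>i<n. a i \<in> locset (*) p UNIV \<Longrightarrow> loc_lsum scale p a g n = loc_zero scale p
               \<Longrightarrow> \<forall>i<n. a i = loc_zero (*) p"
    using free unfolding loc_free_rank_def by blast
  have "\<forall>i<n. \<exists>y w. w \<notin> p \<and> g i = lcls scale p y w"
    using gl by (simp add: mem_locset_iff) blast
  then obtain y0 w0 where yw0: "\<And>i. i < n \<Longrightarrow> w0 i \<notin> p \<and> g i = lcls scale p (y0 i) (w0 i)"
    by metis
  have G0: "G = {lcls scale p (\<Sum>j<n. c j *s y0 j) u | c u. u \<notin> p}"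
    unfolding Gdef by (rule loc_lsum_range_eq[OF p yw0])
  have "g i \<in> G" if i: "i < n" for i
  proof -
    have "g i = lcls scale p (\<Sum>j<n. (if j = i then 1 else 0) *s y0 j) (w0 i)"
      using yw0[OF i] i by (simp add: if_distrib[of "\<lambda>c. c *s _"] cong: if_cong)
    then show ?thesis unfolding G0 using yw0[OF i]
      by (intro CollectI exI[of _ "\<lambda>j. if j = i then 1 else 0"] exI[of _ "w0 i"]) simp
  qed
  then have "\<forall>i<n. \<exists>y w. y \<in> N \<and> w \<notin> p \<and> g i = lcls scale p y w"
    using G by (force simp: mem_locset_iff)
  then obtain y w where yw: "\<And>i. i < n \<Longrightarrow> y i \<in> N \<and> w i \<notin> p \<and> g i = lcls scale p (y i) (w i)"
    by metis
  have "G = {lcls scale p (\<Sum>j<n. c j *s y j) u | c u. u \<notin> p}"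
    unfolding Gdef using yw by (intro loc_lsum_range_eq[OF p]) blast
  moreover have "\<forall>j<n. \<exists>t. t \<notin> p \<and> t * c j = 0"
    if "\<exists>t. t \<notin> p \<and> t *s (\<Sum>j<n. c j *s y j) = 0" for c
    using coefficients_torsion_if_loc_independent[OF p ind _ that] yw by blast
  ultimately have "loc_basis scale p G n y"
    unfolding loc_basis_def locset_range_sum_scale by blast
  then show ?thesis using that yw by blast
qed

lemma loc_submodule_locset:
  assumes p: "prime_ideal p" and K: "subspace K"
  shows "loc_submodule scale p (locset scale p K)"
  unfolding loc_submodule_def
proof (intro conjI ballI)
  show "locset scale p K \<subseteq> locset scale p UNIV" unfolding locset_def by blast
  show "loc_zero scale p \<in> locset scale p K"
    unfolding loc_zero_def mem_locset_iff using subspace_0[OF K] prime_ideal_1[OF p] by blast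
next
  fix X Y assume "X \<in> locset scale p K" "Y \<in> locset scale p K"
  then obtain m u m' u' where X: "X = lcls scale p m u" "m \<in> K" "u \<notin> p"
    and Y: "Y = lcls scale p m' u'" "m' \<in> K" "u' \<notin> p"
    unfolding mem_locset_iff by blast
  show "loc_add scale p X Y \<in> locset scale p K"
    unfolding X Y loc_add_lcls[OF p X(3) Y(3)] mem_locset_iff
    using X Y K prime_ideal_mult_notin[OF p X(3) Y(3)] by (blast intro: subspace_add subspace_scale)
next
  fix A X assume "A \<in> locset (*) p UNIV" "X \<in> locset scale p K"
  then obtain r v m u where A: "A = lcls (*) p r v" "v \<notin> p"
    and X: "X = lcls scale p m u" "m \<in> K" "u \<notin> p"
    unfolding mem_locset_iff module.mem_locset_iff[OF module_mult] by blast
  show "loc_smult scale p A X \<in> locset scale p K"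
    unfolding A X loc_smult_lcls[OF p X(3) A(2)] mem_locset_iff
    using X K prime_ideal_mult_notin[OF p A(2) X(3)] by (blast intro: subspace_scale)
qed

lemma loc_submodule_eq_locset_pullback:
  assumes p: "prime_ideal p" and H: "loc_submodule scale p H"
  shows "subspace {m. lcls scale p m 1 \<in> H}" and "H = locset scale p {m. lcls scale p m 1 \<in> H}"
proof -
  have one: "(1::'a) \<notin> p" using prime_ideal_1[OF p] .
  have Lr: "lcls (*) p r v \<in> locset (*) p UNIV" if "v \<notin> p" for r v
    using that by (auto simp: module.mem_locset_iff[OF module_mult])
  have Hsub: "H \<subseteq> locset scale p UNIV" and H0: "loc_zero scale p \<in> H"
    and Hadd: "\<And>X Y. X \<in> H \<Longrightarrow> Y \<in> H \<Longrightarrow> loc_add scale p X Y \<in> H"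
    and Hsmult: "\<And>A X. A \<in> locset (*) p UNIV \<Longrightarrow> X \<in> H \<Longrightarrow> loc_smult scale p A X \<in> H"
    using H by (simp_all add: loc_submodule_def)
  have denom: "lcls scale p m u \<in> H \<longleftrightarrow> lcls scale p m 1 \<in> H" if u: "u \<notin> p" for m u
  proof
    assume "lcls scale p m u \<in> H"
    then have "loc_smult scale p (lcls (*) p u 1) (lcls scale p m u) \<in> H"
      using Hsmult Lr[OF one] by blast
    moreover have "loc_smult scale p (lcls (*) p u 1) (lcls scale p m u) = lcls scale p m 1"
      unfolding loc_smult_lcls[OF p u one] using u one
      by (subst lcls_eq_iff[OF p]) (auto simp: loc_rel_def intro!: exI[of _ 1])
    ultimately show "lcls scale p m 1 \<in> H" by simp
  next
    assume "lcls scale p m 1 \<in> H"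
    then have "loc_smult scale p (lcls (*) p 1 u) (lcls scale p m 1) \<in> H"
      using Hsmult Lr[OF u] by blast
    then show "lcls scale p m u \<in> H" unfolding loc_smult_lcls[OF p one u] by simp
  qed
  have "lcls scale p 0 1 \<in> H" using H0 by (simp add: loc_zero_def)
  moreover have "lcls scale p (m + m') 1 \<in> H" if "lcls scale p m 1 \<in> H" "lcls scale p m' 1 \<in> H" for m m'
    using Hadd[OF that] by (simp add: loc_add_lcls[OF p one one])
  moreover have "lcls scale p (r *s m) 1 \<in> H" if "lcls scale p m 1 \<in> H" for r m
    using Hsmult[OF Lr[OF one] that] by (simp add: loc_smult_lcls[OF p one one])
  ultimately show "subspace {m. lcls scale p m 1 \<in> H}" unfolding subspace_def by blast
  show "H = locset scale p {m. lcls scale p m 1 \<in> H}"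
    using Hsub denom unfolding locset_def by blast
qed

lemma locset_Int_locset_subset_loc_zero:
  assumes p: "prime_ideal p" and Y: "subspace Y" and K: "subspace K"
    and torsion: "\<And>m. m \<in> Y \<Longrightarrow> m \<in> K \<Longrightarrow> \<exists>t. t \<notin> p \<and> t *s m = 0"
  shows "locset scale p Y \<inter> locset scale p K \<subseteq> {loc_zero scale p}"
proof
  fix X assume "X \<in> locset scale p Y \<inter> locset scale p K"
  then have "X \<in> locset scale p Y" "X \<in> locset scale p K" by simp_all
  then obtain y u k w where X: "X = lcls scale p y u" "X = lcls scale p k w"
    and yk: "y \<in> Y" "k \<in> K" and uw: "u \<notin> p" "w \<notin> p"
    unfolding mem_locset_iff by blast
  then obtain t where t: "t \<notin> p" "(t * w) *s y = (t * u) *s k"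
    using lcls_eq_iff[OF p] unfolding loc_rel_def by metis
  then have "(t * w) *s y \<in> Y" "(t * w) *s y \<in> K"
    using yk subspace_scale[OF Y] subspace_scale[OF K] t(2) by metis+
  then obtain t' where "t' \<notin> p" "(t' * (t * w)) *s y = 0" using torsion by force
  moreover have "t' * (t * w) \<notin> p" using calculation t uw prime_ideal_mult_notin[OF p] by metis
  ultimately show "X \<in> {loc_zero scale p}"
    using X uw lcls_eq_loc_zero_iff[OF p] by blast
qed

lemma loc_direct_summand_locset:
  assumes p: "prime_ideal p" and Y: "subspace Y" and K: "subspace K"
    and torsion: "\<And>m. m \<in> Y \<Longrightarrow> m \<in> K \<Longrightarrow> \<exists>t. t \<notin> p \<and> t *s m = 0"
    and decomp: "\<And>m. \<exists>u y k. u \<notin> p \<and> y \<in> Y \<and> k \<in> K \<and> u *s m = y + k"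
  shows "loc_direct_summand scale p (locset scale p Y)"
proof -
  have subY: "loc_submodule scale p (locset scale p Y)"
    and subK: "loc_submodule scale p (locset scale p K)"
    using loc_submodule_locset[OF p] Y K by blast+
  note locset_Int_locset_subset_loc_zero[OF p Y K torsion]
  moreover have "loc_zero scale p \<in> locset scale p Y \<inter> locset scale p K"
    using subY subK unfolding loc_submodule_def by blast
  moreover have "\<exists>g\<in>locset scale p Y. \<exists>h\<in>locset scale p K. X = loc_add scale p g h"
    if "X \<in> locset scale p UNIV" for X
  proof -
    obtain m u where X: "X = lcls scale p m u" and u: "u \<notin> p"
      using \<open>X \<in> locset scale p UNIV\<close> unfolding mem_locset_iff by blast
    obtain v y k where v: "v \<notin> p" and yk: "y \<in> Y" "k \<in> K" and m: "v *s m = y + k"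
      using decomp by blast
    have vu: "v * u \<notin> p" "v * u * (v * u) \<notin> p" using u v prime_ideal_mult_notin[OF p] by metis+
    have "loc_add scale p (lcls scale p y (v * u)) (lcls scale p k (v * u))
        = lcls scale p ((v * u) *s (v *s m)) (v * u * (v * u))"
      unfolding m loc_add_lcls[OF p vu(1) vu(1)] by (simp add: scale_right_distrib)
    also have "\<dots> = X"
      unfolding X using vu u prime_ideal_1[OF p]
      by (subst lcls_eq_iff[OF p]) (auto simp: loc_rel_def ac_simps intro!: exI[of _ 1])
    moreover have "lcls scale p y (v * u) \<in> locset scale p Y" "lcls scale p k (v * u) \<in> locset scale p K"
      using yk vu(1) unfolding mem_locset_iff by blast+
    ultimately show ?thesis by metis
  qed
  ultimately show ?thesis
    unfolding loc_direct_summand_def using subY subK by blast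
qed

lemma loc_direct_summand_locsetE:
  assumes p: "prime_ideal p" and Y: "subspace Y" and ds: "loc_direct_summand scale p (locset scale p Y)"
  obtains K where "subspace K"
    and "\<And>m. m \<in> Y \<Longrightarrow> m \<in> K \<Longrightarrow> \<exists>t. t \<notin> p \<and> t *s m = 0"
    and "\<And>m. \<exists>u y k. u \<notin> p \<and> y \<in> Y \<and> k \<in> K \<and> u *s m = y + k"
proof -
  have one: "(1::'a) \<notin> p" using prime_ideal_1[OF p] .
  obtain H where H: "loc_submodule scale p H" and inter: "locset scale p Y \<inter> H = {loc_zero scale p}"
    and decomp: "\<forall>X\<in>locset scale p UNIV. \<exists>g\<in>locset scale p Y. \<exists>h\<in>H. X = loc_add scale p g h"
    using ds unfolding loc_direct_summand_def by (elim conjE exE) (rule that)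
  define K where "K = {m. lcls scale p m 1 \<in> H}"
  have K: "subspace K" and HK: "H = locset scale p K"
    unfolding K_def using loc_submodule_eq_locset_pullback[OF p H] by simp_all
  have torsion: "\<exists>t. t \<notin> p \<and> t *s m = 0" if "m \<in> Y" "m \<in> K" for m
  proof -
    have "lcls scale p m 1 \<in> locset scale p Y" using that one unfolding mem_locset_iff by blast
    moreover have "lcls scale p m 1 \<in> H" using that unfolding K_def by simp
    ultimately have "lcls scale p m 1 = loc_zero scale p" using inter by blast
    then show ?thesis using lcls_eq_loc_zero_iff[OF p one] by simp
  qed
  have decomposition: "\<exists>u y k. u \<notin> p \<and> y \<in> Y \<and> k \<in> K \<and> u *s m = y + k" for m
  proof -
    have "lcls scale p m 1 \<in> locset scale p UNIV" using one unfolding mem_locset_iff by blast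
    then obtain g h where "g \<in> locset scale p Y" "h \<in> locset scale p K"
      and gh: "lcls scale p m 1 = loc_add scale p g h"
      using decomp unfolding HK by blast
    then obtain y u k w where g: "g = lcls scale p y u" "y \<in> Y" "u \<notin> p"
      and h: "h = lcls scale p k w" "k \<in> K" "w \<notin> p"
      unfolding mem_locset_iff by blast
    have uw: "u * w \<notin> p" using g h prime_ideal_mult_notin[OF p] by blast
    have "lcls scale p m 1 = lcls scale p (w *s y + u *s k) (u * w)"
      using gh unfolding g h loc_add_lcls[OF p g(3) h(3)] .
    then obtain t where t: "t \<notin> p" "(t * (u * w)) *s m = t *s (w *s y + u *s k)"
      using lcls_eq_iff[OF p one uw] unfolding loc_rel_def by auto
    show ?thesis
    proof (intro exI conjI)
      show "t * (u * w) \<notin> p" using t uw prime_ideal_mult_notin[OF p] by blast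
      show "(t * w) *s y \<in> Y" using g subspace_scale[OF Y] by blast
      show "(t * u) *s k \<in> K" using h subspace_scale[OF K] by blast
      show "(t * (u * w)) *s m = (t * w) *s y + (t * u) *s k"
        using t by (simp add: scale_right_distrib)
    qed
  qed
  show ?thesis by (rule that[OF K torsion decomposition])
qed

end

section \<open>Dual pairs\<close>

definition dual_pair ::
    "('a::comm_ring_1 \<Rightarrow> 'b::ab_group_add \<Rightarrow> 'b) \<Rightarrow> 'a set \<Rightarrow> 'b set \<Rightarrow> nat \<Rightarrow> bool" where
  "dual_pair scale p S n \<longleftrightarrow>
     (\<exists>x f s. s \<notin> p \<and> (\<forall>j<n. x j \<in> module.span scale S) \<and> (\<forall>i<n. module_hom scale (*) (f i)) \<and>
        (\<forall>i<n. \<forall>j<n. f i (x j) = (if i = j then s else 0)))"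

definition loc_free_summand ::
    "('a::comm_ring_1 \<Rightarrow> 'b::ab_group_add \<Rightarrow> 'b) \<Rightarrow> 'a set \<Rightarrow> 'b set \<Rightarrow> nat \<Rightarrow> bool" where
  "loc_free_summand scale p S n \<longleftrightarrow>
     (\<exists>G. loc_free_rank scale p G n \<and> G \<subseteq> locset scale p (module.span scale S) \<and>
          loc_direct_summand scale p G)"

lemma dual_pair_0: "prime_ideal p \<Longrightarrow> dual_pair scale p S 0"
  unfolding dual_pair_def using prime_ideal_1 by blast

lemma dual_pair_spreads:
  "dual_pair scale q S n \<Longrightarrow> \<exists>s. s \<notin> q \<and> (\<forall>p. s \<notin> p \<longrightarrow> dual_pair scale p S n)"
  unfolding dual_pair_def by blast

context module
begin

lemma module_hom_sum_scale:
  assumes "module_hom scale (*) f"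
  shows "f (\<Sum>j\<in>A. c j *s x j) = (\<Sum>j\<in>A. c j * f (x j))"
  by (simp add: module_hom.sum[OF assms] module_hom.scale[OF assms])

context
  fixes p :: "'a set" and s :: 'a and n :: nat and x :: "nat \<Rightarrow> 'b" and f :: "nat \<Rightarrow> 'b \<Rightarrow> 'a"
  assumes p: "prime_ideal p" and s: "s \<notin> p" and f: "\<And>i. i < n \<Longrightarrow> module_hom scale (*) (f i)"
    and fx: "\<And>i j. i < n \<Longrightarrow> j < n \<Longrightarrow> f i (x j) = (if i = j then s else 0)"
begin

lemma dual_forms_sum: "k < n \<Longrightarrow> f k (\<Sum>j<n. c j *s x j) = c k * s"
proof -
  assume k: "k < n"
  have "f k (\<Sum>j<n. c j *s x j) = (\<Sum>j<n. c j * f k (x j))"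
    by (rule module_hom_sum_scale[OF f[OF k]])
  also have "\<dots> = (\<Sum>j<n. if j = k then c k * s else 0)"
    using k by (intro sum.cong) (auto simp: fx)
  finally show ?thesis using k by simp
qed

lemma loc_basis_if_dual_forms: "loc_basis scale p (locset scale p (range (\<lambda>c. \<Sum>j<n. c j *s x j))) n x"
  unfolding loc_basis_def
proof (intro conjI refl allI impI)
  fix c j assume "\<exists>t. t \<notin> p \<and> t *s (\<Sum>j<n. c j *s x j) = 0" and j: "j < n"
  then obtain t where t: "t \<notin> p" "t *s (\<Sum>j<n. c j *s x j) = 0" by blast
  have "(t * s) * c j = 0"
    using arg_cong[OF t(2), of "f j"] dual_forms_sum[OF j] module_hom.scale[OF f[OF j]]
      module_hom.zero[OF f[OF j]]
    by (simp add: ac_simps)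
  then show "\<exists>t. t \<notin> p \<and> t * c j = 0" using t s prime_ideal_mult_notin[OF p] by blast
qed

lemma loc_direct_summand_if_dual_forms:
  "loc_direct_summand scale p (locset scale p (range (\<lambda>c. \<Sum>j<n. c j *s x j)))"
proof (rule loc_direct_summand_locset[OF p subspace_range_sum_scale])
  let ?K = "{m. \<forall>i<n. f i m = 0}"
  show "subspace ?K"
    unfolding subspace_def using module_hom.add[OF f] module_hom.scale[OF f] module_hom.zero[OF f] by simp
  show "\<exists>t. t \<notin> p \<and> t *s m = 0" if Y: "m \<in> range (\<lambda>c. \<Sum>j<n. c j *s x j)" and "m \<in> ?K" for m
  proof -
    obtain c where m: "m = (\<Sum>j<n. c j *s x j)" using Y by blast
    have "c j * s = 0" if "j < n" for j
      using \<open>m \<in> ?K\<close> dual_forms_sum[OF that, of c, folded m] that by simp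
    then have "s *s m = 0" unfolding m scale_sum_right by (simp add: ac_simps)
    then show ?thesis using s by blast
  qed
  show "\<exists>u y k. u \<notin> p \<and> y \<in> range (\<lambda>c. \<Sum>j<n. c j *s x j) \<and> k \<in> ?K \<and> u *s m = y + k" for m
  proof (intro exI conjI)
    let ?y = "\<Sum>j<n. f j m *s x j"
    show "s \<notin> p" "?y \<in> range (\<lambda>c. \<Sum>j<n. c j *s x j)" "s *s m = ?y + (s *s m - ?y)" using s by auto
    show "s *s m - ?y \<in> ?K"
      using module_hom.diff[OF f] module_hom.scale[OF f] dual_forms_sum by (simp add: ac_simps)
  qed
qed

end

lemma loc_free_summand_if_dual_pair:
  assumes p: "prime_ideal p" and "dual_pair scale p S n"
  shows "loc_free_summand scale p S n"
proof -
  obtain x f s where s: "s \<notin> p" and x: "\<And>j. j < n \<Longrightarrow> x j \<in> span S"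
    and f: "\<And>i. i < n \<Longrightarrow> module_hom scale (*) (f i)"
    and fx: "\<And>i j. i < n \<Longrightarrow> j < n \<Longrightarrow> f i (x j) = (if i = j then s else 0)"
    using assms(2) unfolding dual_pair_def by blast
  let ?G = "locset scale p (range (\<lambda>c. \<Sum>j<n. c j *s x j))"
  have "loc_free_rank scale p ?G n"
    by (rule loc_free_rank_if_loc_basis[OF p loc_basis_if_dual_forms[OF p s f fx]])
  moreover have "?G \<subseteq> locset scale p (span S)"
    unfolding locset_def using x by (blast intro: span_sum span_scale)
  ultimately show ?thesis
    unfolding loc_free_summand_def using loc_direct_summand_if_dual_forms[OF p s f fx] by blast
qed

lemma module_hom_from_generators:
  assumes F: "finite F" "span F = UNIV"
    and resp: "\<And>c. (\<Sum>v\<in>F. c v *s v) = 0 \<Longrightarrow> (\<Sum>v\<in>F. c v * a v) = 0"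
  obtains \<phi> where "module_hom scale (*) \<phi>" "\<And>c. \<phi> (\<Sum>v\<in>F. c v *s v) = (\<Sum>v\<in>F. c v * a v)"
proof -
  have "\<exists>c. m = (\<Sum>v\<in>F. c v *s v)" for m
    using F unfolding span_finite[OF F(1)] by auto
  then obtain coord where coord: "\<And>m. m = (\<Sum>v\<in>F. coord m v *s v)" by metis
  define \<phi> where "\<phi> m = (\<Sum>v\<in>F. coord m v * a v)" for m
  have eval: "\<phi> (\<Sum>v\<in>F. c v *s v) = (\<Sum>v\<in>F. c v * a v)" for c
  proof -
    let ?d = "\<lambda>v. coord (\<Sum>v\<in>F. c v *s v) v - c v"
    have "(\<Sum>v\<in>F. ?d v *s v) = 0"
      using coord[of "\<Sum>v\<in>F. c v *s v"] by (simp add: scale_left_diff_distrib sum_subtractf)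
    then have "(\<Sum>v\<in>F. ?d v * a v) = 0" by (rule resp)
    then show ?thesis unfolding \<phi>_def by (simp add: left_diff_distrib sum_subtractf)
  qed
  have "\<phi> (m + m') = \<phi> m + \<phi> m'" for m m'
  proof -
    have "m + m' = (\<Sum>v\<in>F. (coord m v + coord m' v) *s v)"
      by (subst (1 2) coord) (simp add: scale_left_distrib sum.distrib)
    then show ?thesis by (simp add: eval) (simp add: \<phi>_def distrib_right sum.distrib)
  qed
  moreover have "\<phi> (r *s m) = r * \<phi> m" for r m
  proof -
    have "r *s m = (\<Sum>v\<in>F. (r * coord m v) *s v)"
      by (subst coord) (simp add: scale_sum_right)
    then show ?thesis by (simp add: eval) (simp add: \<phi>_def sum_distrib_left ac_simps)
  qed
  ultimately have "module_hom scale (*) \<phi>"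
    using module_hom_iff module_axioms module_mult by blast
  then show ?thesis using that eval by blast
qed

lemma common_denominator_decomposition:
  assumes p: "prime_ideal p" and F: "finite F" and K: "subspace K"
    and decomp: "\<And>m. \<exists>u c k. u \<notin> p \<and> k \<in> K \<and> u *s m = (\<Sum>j<n. c j *s y j) + k"
  obtains U \<rho> \<kappa> where "U \<notin> p" "\<And>v. \<kappa> v \<in> K"
    "\<And>c. (\<Sum>j<n. (\<Sum>v\<in>F. c v * \<rho> v j) *s y j) = U *s (\<Sum>v\<in>F. c v *s v) - (\<Sum>v\<in>F. c v *s \<kappa> v)"
proof -
  obtain u C k where uCk: "\<And>m. u m \<notin> p \<and> k m \<in> K \<and> u m *s m = (\<Sum>j<n. C m j *s y j) + k m"
    using decomp by metis
  define U where "U = (\<Prod>v\<in>F. u v)"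
  define Q where "Q v = (\<Prod>v'\<in>F-{v}. u v')" for v
  have U: "U \<notin> p" unfolding U_def using uCk by (intro prime_ideal_prod_notin[OF p]) blast
  have rep: "U *s v = (\<Sum>j<n. (Q v * C v j) *s y j) + Q v *s k v" if "v \<in> F" for v
  proof -
    have "U = Q v * u v" unfolding U_def Q_def using F that by (simp add: prod.remove ac_simps)
    then have "U *s v = Q v *s (u v *s v)" by simp
    then show ?thesis using uCk[of v] by (simp add: scale_right_distrib scale_sum_right)
  qed
  have expand: "(\<Sum>j<n. (\<Sum>v\<in>F. c v * (Q v * C v j)) *s y j)
      = U *s (\<Sum>v\<in>F. c v *s v) - (\<Sum>v\<in>F. c v *s (Q v *s k v))" for c
  proof -
    have "(\<Sum>j<n. (\<Sum>v\<in>F. c v * (Q v * C v j)) *s y j) = (\<Sum>v\<in>F. c v *s (\<Sum>j<n. (Q v * C v j) *s y j))"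
      by (simp add: scale_sum_left scale_sum_right sum.swap[of _ "{..<n}"])
    also have "\<dots> = (\<Sum>v\<in>F. c v *s (U *s v - Q v *s k v))"
      by (intro sum.cong refl) (simp add: rep)
    finally show ?thesis
      by (simp add: scale_right_diff_distrib sum_subtractf scale_sum_right ac_simps)
  qed
  have "Q v *s k v \<in> K" for v using uCk subspace_scale[OF K] by blast
  from that[OF U this expand] show ?thesis .
qed

lemma coordinate_forms:
  assumes N: "noetherian_ring TYPE('a)" and p: "prime_ideal p"
    and F: "finite F" "span F = UNIV" and K: "subspace K"
    and indep: "\<And>c. (\<Sum>j<n. c j *s y j) \<in> K \<Longrightarrow> \<forall>j<n. \<exists>t. t \<notin> p \<and> t * c j = 0"
    and \<kappa>: "\<And>v. \<kappa> v \<in> K"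
    and expand: "\<And>c. (\<Sum>j<n. (\<Sum>v\<in>F. c v * \<rho> v j) *s y j) = U *s (\<Sum>v\<in>F. c v *s v) - (\<Sum>v\<in>F. c v *s \<kappa> v)"
  obtains T \<phi> where "T \<notin> p" "\<And>j. j < n \<Longrightarrow> module_hom scale (*) (\<phi> j)"
    "\<And>j c. j < n \<Longrightarrow> \<phi> j (\<Sum>v\<in>F. c v *s v) = T * (\<Sum>v\<in>F. c v * \<rho> v j)"
proof -
  \<comment> \<open>relations among the generators become torsion in the coordinates \<open>\<rho>\<close>; one common
    annihilator \<open>T\<close> makes \<open>v \<mapsto> T * \<rho> v j\<close> respect all of them\<close>
  let ?R = "{\<Sum>v\<in>F. c v * \<rho> v j | c j. j < n \<and> (\<Sum>v\<in>F. c v *s v) = 0}"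
  have R_torsion: "\<exists>t. t \<notin> p \<and> t * z = 0" if "z \<in> ?R" for z
  proof -
    obtain c j where z: "z = (\<Sum>v\<in>F. c v * \<rho> v j)" "j < n" "(\<Sum>v\<in>F. c v *s v) = 0"
      using \<open>z \<in> ?R\<close> by blast
    have "(\<Sum>v\<in>F. c v *s \<kappa> v) \<in> K" using \<kappa> by (intro subspace_sum subspace_scale K)
    then have "(\<Sum>j<n. (\<Sum>v\<in>F. c v * \<rho> v j) *s y j) \<in> K"
      unfolding expand z(3) using subspace_neg[OF K] by simp
    from indep[OF this] show ?thesis using z(1,2) by blast
  qed
  obtain T where T: "T \<notin> p" and rel: "\<And>z. z \<in> ?R \<Longrightarrow> T * z = 0"
    using noetherian_ring_common_annihilator[OF N p R_torsion] by blast
  have "\<exists>\<phi>. module_hom scale (*) \<phi> \<and> (\<forall>c. \<phi> (\<Sum>v\<in>F. c v *s v) = T * (\<Sum>v\<in>F. c v * \<rho> v j))"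
    if j: "j < n" for j
  proof -
    have resp: "(\<Sum>v\<in>F. c v * (T * \<rho> v j)) = 0" if "(\<Sum>v\<in>F. c v *s v) = 0" for c
      using rel[of "\<Sum>v\<in>F. c v * \<rho> v j"] that j by (auto simp: sum_distrib_left ac_simps)
    obtain \<phi> where "module_hom scale (*) \<phi>" "\<And>c. \<phi> (\<Sum>v\<in>F. c v *s v) = (\<Sum>v\<in>F. c v * (T * \<rho> v j))"
      using module_hom_from_generators[OF F resp] by blast
    then show ?thesis by (intro exI[of _ \<phi>]) (simp add: sum_distrib_left ac_simps)
  qed
  then obtain \<phi> where "\<And>j. j < n \<Longrightarrow> module_hom scale (*) (\<phi> j)"
    "\<And>j c. j < n \<Longrightarrow> \<phi> j (\<Sum>v\<in>F. c v *s v) = T * (\<Sum>v\<in>F. c v * \<rho> v j)"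
    by metis
  from that[OF T this] show ?thesis .
qed

lemma dual_pair_if_torsion_dual:
  assumes p: "prime_ideal p" and s: "s \<notin> p" and x: "\<And>j. j < n \<Longrightarrow> x j \<in> span S"
    and f: "\<And>i. i < n \<Longrightarrow> module_hom scale (*) (f i)"
    and fx: "\<And>i j. i < n \<Longrightarrow> j < n \<Longrightarrow> \<exists>t. t \<notin> p \<and> t * (f i (x j) - (if i = j then s else 0)) = 0"
  shows "dual_pair scale p S n"
proof -
  let ?\<Delta> = "{f i (x j) - (if i = j then s else 0) | i j. i \<in> {..<n} \<and> j \<in> {..<n}}"
  have "finite ?\<Delta>" by (rule finite_image_set2) simp_all
  moreover have "\<exists>t. t \<notin> p \<and> t * z = 0" if "z \<in> ?\<Delta>" for z using that fx by blast
  ultimately obtain t where t: "t \<notin> p" and t\<Delta>: "\<And>z. z \<in> ?\<Delta> \<Longrightarrow> t * z = 0"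
    using prime_ideal_finite_common_annihilator[OF p] by blast
  have tfx: "t * (f i (x j) - (if i = j then s else 0)) = 0" if "i < n" "j < n" for i j
    using that by (intro t\<Delta>) blast
  show ?thesis
    unfolding dual_pair_def
  proof (intro exI conjI allI impI)
    show "t * s \<notin> p" using t s prime_ideal_mult_notin[OF p] by blast
    show "x j \<in> span S" if "j < n" for j using x that .
    show "module_hom scale (*) (\<lambda>m. t * f i m)" if "i < n" for i
      using f[OF that] by (simp add: module_hom_iff distrib_left mult.left_commute)
    show "t * f i (x j) = (if i = j then t * s else 0)" if "i < n" "j < n" for i j
      using tfx[OF that] by (auto simp: algebra_simps)
  qed
qed

lemma dual_pair_if_complement:
  assumes N: "noetherian_ring TYPE('a)" and p: "prime_ideal p"
    and F: "finite F" "span F = UNIV"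
    and y: "\<And>j. j < n \<Longrightarrow> y j \<in> span S" and K: "subspace K"
    and indep: "\<And>c. (\<Sum>j<n. c j *s y j) \<in> K \<Longrightarrow> \<forall>j<n. \<exists>t. t \<notin> p \<and> t * c j = 0"
    and decomp: "\<And>m. \<exists>u c k. u \<notin> p \<and> k \<in> K \<and> u *s m = (\<Sum>j<n. c j *s y j) + k"
  shows "dual_pair scale p S n"
proof -
  obtain U \<kappa> \<rho> where U: "U \<notin> p" and \<kappa>: "\<And>v. \<kappa> v \<in> K" and expand:
    "\<And>c. (\<Sum>j<n. (\<Sum>v\<in>F. c v * \<rho> v j) *s y j) = U *s (\<Sum>v\<in>F. c v *s v) - (\<Sum>v\<in>F. c v *s \<kappa> v)"
    by (rule common_denominator_decomposition[OF p F(1) K decomp], rule that)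
  obtain T \<phi> where T: "T \<notin> p" and \<phi>: "\<And>j. j < n \<Longrightarrow> module_hom scale (*) (\<phi> j)"
    and \<phi>_eval: "\<And>j c. j < n \<Longrightarrow> \<phi> j (\<Sum>v\<in>F. c v *s v) = T * (\<Sum>v\<in>F. c v * \<rho> v j)"
    using coordinate_forms[OF N p F K indep \<kappa> expand] by blast
  have dual: "\<exists>t. t \<notin> p \<and> t * (\<phi> i (y j) - (if i = j then T * U else 0)) = 0"
    if i: "i < n" and j: "j < n" for i j
  proof -
    obtain c where yj: "y j = (\<Sum>v\<in>F. c v *s v)" using F unfolding span_finite[OF F(1)] by blast
    let ?e = "\<lambda>i'. (\<Sum>v\<in>F. c v * \<rho> v i') - (if i' = j then U else 0)"
    have "(\<Sum>i'<n. (if i' = j then U else 0) *s y i') = U *s y j"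
      using j by (simp add: if_distrib[of "\<lambda>a. a *s _"] cong: if_cong)
    then have "(\<Sum>i'<n. ?e i' *s y i') = - (\<Sum>v\<in>F. c v *s \<kappa> v)"
      using expand[of c] by (simp add: scale_left_diff_distrib sum_subtractf yj)
    moreover have "(\<Sum>v\<in>F. c v *s \<kappa> v) \<in> K" using \<kappa> by (intro subspace_sum subspace_scale K)
    ultimately have "(\<Sum>i'<n. ?e i' *s y i') \<in> K" using subspace_neg[OF K] by simp
    from indep[OF this] obtain t where "t \<notin> p" "t * ?e i = 0" using i by blast
    moreover have "t * (\<phi> i (y j) - (if i = j then T * U else 0)) = T * (t * ?e i)"
      unfolding yj \<phi>_eval[OF i] by (simp add: algebra_simps)
    ultimately show ?thesis by auto
  qed
  have "T * U \<notin> p" using T U by (rule prime_ideal_mult_notin[OF p])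
  from dual_pair_if_torsion_dual[OF p this y \<phi> dual] show ?thesis .
qed

lemma dual_pair_if_loc_free_summand:
  assumes N: "noetherian_ring TYPE('a)" and p: "prime_ideal p"
    and F: "finite F" "span F = UNIV" and "loc_free_summand scale p S n"
  shows "dual_pair scale p S n"
proof -
  obtain G where free: "loc_free_rank scale p G n" and G: "G \<subseteq> locset scale p (span S)"
    and ds: "loc_direct_summand scale p G"
    using assms(5) unfolding loc_free_summand_def by blast
  obtain y where y: "\<forall>j<n. y j \<in> span S" and B: "loc_basis scale p G n y"
    by (rule loc_basis_if_loc_free_rank[OF p free G])
  let ?Y = "range (\<lambda>c. \<Sum>j<n. c j *s y j)"
  have GY: "G = locset scale p (?Y)" and indep:
    "\<And>c. \<exists>t. t \<notin> p \<and> t *s (\<Sum>j<n. c j *s y j) = 0 \<Longrightarrow> \<forall>j<n. \<exists>t. t \<notin> p \<and> t * c j = 0"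
    using B unfolding loc_basis_def by blast+
  obtain K where K: "subspace K" and torsion: "\<And>m. m \<in> ?Y \<Longrightarrow> m \<in> K \<Longrightarrow> \<exists>t. t \<notin> p \<and> t *s m = 0"
    and decomp: "\<And>m. \<exists>u y' k. u \<notin> p \<and> y' \<in> ?Y \<and> k \<in> K \<and> u *s m = y' + k"
    using loc_direct_summand_locsetE[OF p subspace_range_sum_scale ds[unfolded GY]] by blast
  show ?thesis
  proof (rule dual_pair_if_complement[OF N p F _ K])
    show "y j \<in> span S" if "j < n" for j using y that by blast
    show "\<forall>j<n. \<exists>t. t \<notin> p \<and> t * c j = 0" if "(\<Sum>j<n. c j *s y j) \<in> K" for c
      using indep torsion[OF rangeI that] by blast
    show "\<exists>u c k. u \<notin> p \<and> k \<in> K \<and> u *s m = (\<Sum>j<n. c j *s y j) + k" for m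
      using decomp[of m] by blast
  qed
qed

lemma dual_pair_le_card:
  assumes p: "prime_ideal p" and F: "finite F" "span F = UNIV" and "dual_pair scale p S n"
  shows "n \<le> card F"
proof -
  obtain x f s where s: "s \<notin> p" and f: "\<And>i. i < n \<Longrightarrow> module_hom scale (*) (f i)"
    and fx: "\<And>i j. i < n \<Longrightarrow> j < n \<Longrightarrow> f i (x j) = (if i = j then s else 0)"
    using assms(4) unfolding dual_pair_def by blast
  have "\<forall>j. \<exists>c. x j = (\<Sum>l\<in>F. c l *s l)" using F unfolding span_finite[OF F(1)] by auto
  then obtain c where c: "\<And>j. x j = (\<Sum>l\<in>F. c j l *s l)" by metis
  have "factors_mod p s {..<n} F f c"
    unfolding factors_mod_def
  proof (intro ballI)
    fix i j assume "i \<in> {..<n}" "j \<in> {..<n}"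
    then have "(\<Sum>l\<in>F. f i l * c j l) - (if i = j then s else 0) = 0"
      using fx[of i j] module_hom_sum_scale[OF f, of i "c j" id F] c[of j] by (simp add: ac_simps)
    then show "(\<Sum>l\<in>F. f i l * c j l) - (if i = j then s else 0) \<in> p" using prime_ideal_0[OF p] by simp
  qed
  from card_le_if_factors_mod[OF p F(1) _ s this] show ?thesis by simp
qed

end

section \<open>Generic points of basic sets\<close>

context
  fixes X :: "'a::comm_ring_1 set set" and d :: "'a set \<Rightarrow> 'b::order"
  assumes antimono: "\<And>p q. q \<in> X \<Longrightarrow> p \<in> X \<Longrightarrow> q \<subseteq> p \<Longrightarrow> d p \<le> d q"
    and locally_ge: "\<And>q. q \<in> X \<Longrightarrow> \<exists>s. s \<notin> q \<and> (\<forall>p\<in>X. s \<notin> p \<longrightarrow> d q \<le> d p)"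
begin

lemma value_at_Inter_eq:
  assumes C: "C \<subseteq> {p\<in>X. d p = n}" and p: "p \<in> C" and q: "\<Inter>C \<in> X"
  shows "d (\<Inter>C) = n"
proof (rule antisym)
  obtain s where "s \<notin> \<Inter>C" and s: "\<forall>p'\<in>X. s \<notin> p' \<longrightarrow> d (\<Inter>C) \<le> d p'"
    using locally_ge[OF q] by blast
  then obtain p' where "p' \<in> C" "s \<notin> p'" by blast
  moreover from this(1) have "p' \<in> X" "d p' = n" using C by blast+
  ultimately show "d (\<Inter>C) \<le> n" using s by metis
  have "p \<in> X" "d p = n" using C p by blast+
  then show "n \<le> d (\<Inter>C)" using antimono[OF q] p by blast
qed

lemma basic_generic_points:
  assumes N: "noetherian_ring TYPE('a)" and X: "basic X" and fin: "finite (d ` X)"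
  shows "\<exists>\<Lambda>. finite \<Lambda> \<and> \<Lambda> \<subseteq> X \<and> (\<forall>p \<in> X - \<Lambda>. \<exists>q \<in> \<Lambda>. q \<subset> p \<and> d p = d q)"
proof -
  have XS: "X \<subseteq> Spec" and X_Inter: "\<And>C. C \<subseteq> X \<Longrightarrow> C \<noteq> {} \<Longrightarrow> prime_ideal (\<Inter>C) \<Longrightarrow> \<Inter>C \<in> X"
    using X unfolding basic_def by blast+
  have "finite_prime_cover {p\<in>X. d p = n}" for n
    by (rule noetherian_ring_finite_prime_cover[OF N]) (use XS in blast)
  then have "\<forall>n. \<exists>\<C>. finite \<C> \<and>
      (\<forall>C\<in>\<C>. C \<noteq> {} \<and> C \<subseteq> {p\<in>X. d p = n} \<and> prime_ideal (\<Inter>C)) \<and> {p\<in>X. d p = n} \<subseteq> \<Union>\<C>"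
    unfolding finite_prime_cover_def by blast
  from choice[OF this] obtain \<C> where \<C>: "\<forall>n. finite (\<C> n) \<and>
      (\<forall>C\<in>\<C> n. C \<noteq> {} \<and> C \<subseteq> {p\<in>X. d p = n} \<and> prime_ideal (\<Inter>C)) \<and> {p\<in>X. d p = n} \<subseteq> \<Union>(\<C> n)"
    by blast
  have Inter_mem: "\<Inter>C \<in> X" if "C \<in> \<C> n" for C n
  proof (rule X_Inter)
    show "C \<subseteq> X" "C \<noteq> {}" "prime_ideal (\<Inter>C)" using spec[OF \<C>, of n] that by blast+
  qed
  define \<Lambda> where "\<Lambda> = (\<Union>n\<in>d ` X. Inter ` \<C> n)"
  have "finite (Inter ` \<C> n)" for n using \<C> by simp
  then have "finite \<Lambda>" unfolding \<Lambda>_def by (rule finite_UN_I[OF fin])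
  moreover have "\<Lambda> \<subseteq> X" unfolding \<Lambda>_def using Inter_mem by auto
  moreover have "\<forall>p \<in> X - \<Lambda>. \<exists>q\<in>\<Lambda>. q \<subset> p \<and> d p = d q"
  proof
    fix p assume p: "p \<in> X - \<Lambda>"
    obtain C where C: "C \<in> \<C> (d p)" "p \<in> C" using spec[OF \<C>, of "d p"] p by blast
    have q: "\<Inter>C \<in> \<Lambda>" unfolding \<Lambda>_def using p C(1) by (intro UN_I[of "d p"]) auto
    have "C \<subseteq> {p'\<in>X. d p' = d p}" using spec[OF \<C>, of "d p"] C(1) by blast
    then have "d (\<Inter>C) = d p" by (rule value_at_Inter_eq[OF _ C(2) Inter_mem[OF C(1)]])
    moreover have "\<Inter>C \<noteq> p" using q p by blast
    then have "\<Inter>C \<subset> p" using C(2) by blast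
    ultimately show "\<exists>q\<in>\<Lambda>. q \<subset> p \<and> d p = d q" by (intro bexI[OF _ q]) simp
  qed
  ultimately show ?thesis by (intro exI[of _ \<Lambda>] conjI)
qed

end

section \<open>The invariant \<open>\<delta>\<close>\<close>

context module
begin

context
  fixes F :: "'b set"
  assumes N: "noetherian_ring TYPE('a)" and F: "finite F" "span F = UNIV"
begin

lemma delta_eq_Greatest_dual_pair:
  assumes p: "prime_ideal p"
  shows "delta scale p S = (GREATEST n. dual_pair scale p S n)"
proof -
  have "loc_free_summand scale p S n \<longleftrightarrow> dual_pair scale p S n" for n
    using loc_free_summand_if_dual_pair[OF p] dual_pair_if_loc_free_summand[OF N p F] by blast
  then show ?thesis unfolding delta_def loc_free_summand_def[symmetric] by simp
qed

lemma dual_pair_delta: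
  assumes p: "prime_ideal p"
  shows "dual_pair scale p S (delta scale p S)"
  unfolding delta_eq_Greatest_dual_pair[OF p]
  by (rule GreatestI_nat[where P = "dual_pair scale p S",
        OF dual_pair_0[OF p] dual_pair_le_card[OF p F]])

lemma le_delta_if_dual_pair:
  assumes p: "prime_ideal p" and "dual_pair scale p S n"
  shows "n \<le> delta scale p S"
  unfolding delta_eq_Greatest_dual_pair[OF p]
  by (rule Greatest_le_nat[where P = "dual_pair scale p S", OF assms(2) dual_pair_le_card[OF p F]])

lemma delta_le_card: "prime_ideal p \<Longrightarrow> delta scale p S \<le> card F"
  using dual_pair_le_card[OF _ F dual_pair_delta] .

lemma delta_locally_ge:
  assumes "prime_ideal q"
  shows "\<exists>s. s \<notin> q \<and> (\<forall>p. prime_ideal p \<and> s \<notin> p \<longrightarrow> delta scale q S \<le> delta scale p S)"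
proof -
  obtain s where "s \<notin> q" "\<forall>p. s \<notin> p \<longrightarrow> dual_pair scale p S (delta scale q S)"
    using dual_pair_spreads[OF dual_pair_delta[OF assms]] by blast
  then show ?thesis using le_delta_if_dual_pair by blast
qed

lemma delta_antimono:
  assumes "prime_ideal q" "prime_ideal p" "q \<subseteq> p"
  shows "delta scale p S \<le> delta scale q S"
proof -
  obtain s where "s \<notin> p" "\<forall>p'. s \<notin> p' \<longrightarrow> dual_pair scale p' S (delta scale p S)"
    using dual_pair_spreads[OF dual_pair_delta[OF assms(2)]] by blast
  then show ?thesis using le_delta_if_dual_pair[OF assms(1)] assms(3) by blast
qed

end

end

theorem lemma3p6:
  fixes scale :: "'a::comm_ring_1 \<Rightarrow> 'm::ab_group_add \<Rightarrow> 'm"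
    and X :: "'a set set" and S :: "'m set"
  assumes "noetherian_ring TYPE('a)"
    and "module scale"
    and "finitely_generated scale"
    and "basic X"
  shows "\<exists>\<Lambda>. finite \<Lambda> \<and> \<Lambda> \<subseteq> X \<and>
           (\<forall>p \<in> X - \<Lambda>. \<exists>q \<in> \<Lambda>. q \<subset> p \<and> delta scale p S = delta scale q S)"
proof (rule basic_generic_points[of X "\<lambda>p. delta scale p S", OF _ _ assms(1,4)])
  obtain F where F: "finite F" "module.span scale F = UNIV"
    using assms(3) unfolding finitely_generated_def by blast
  have prime: "prime_ideal p" if "p \<in> X" for p
    using assms(4) that unfolding basic_def Spec_def by blast
  have "delta scale p S \<in> {..card F}" if "p \<in> X" for p
    using module.delta_le_card[OF assms(2) assms(1) F prime[OF that]] by simp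
  then show "finite ((\<lambda>p. delta scale p S) ` X)" by (meson finite_atMost finite_subset image_subsetI)
  show "delta scale p S \<le> delta scale q S" if "q \<in> X" "p \<in> X" "q \<subseteq> p" for p q
    using module.delta_antimono[OF assms(2) assms(1) F prime prime] that by blast
  show "\<exists>s. s \<notin> q \<and> (\<forall>p\<in>X. s \<notin> p \<longrightarrow> delta scale q S \<le> delta scale p S)" if "q \<in> X" for q
    using module.delta_locally_ge[OF assms(2) assms(1) F prime[OF that]] prime by blast
qed

end
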